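(* Suppose that $\mathrm{rot}(\mathcal G)$ is finite and $\mathcal R\subset\mathcal G$ has Property 2. Then $\ker(\|\cdot\|_{\mathcal R})=U_{\mathrm{iso},0,0}$. Moreover, with $d_3=d-d_{\mathrm{aff}}$ and $d_4=d_{\mathrm{aff}}-d_2$, the map \[\mathbb R^d\times\mathbb R^{d_3\times d_4}\times\mathrm{Skew}(d_4)\to\ker(\|\cdot\|_{\mathcal R}),\quad(a,A_1,A_2)\mapsto\Big(g\mapsto\mathrm{rot}(g)^T\Big(a+\Big(\begin{pmatrix}0&A_1\\-A_1^T&A_2\end{pmatrix}\oplus0_{d_2\times d_2}\Big)(g\cdot x_0-x_0)\Big)\Big)\] is a linear isomorphism; in particular $\dim\ker(\|\cdot\|_{\mathcal R})=d+d_4(d_3+d_1-1)/2$.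
   Context: Euclidean group: $\mathrm E(n)$ consists of pairs $(A|b)$, $A\in\mathrm O(n)$, $b\in\mathbb R^n$, acting by $(A|b)\cdot x=Ax+b$, product $(A_1|b_1)(A_2|b_2)=(A_1A_2|b_1+A_1b_2)$; $\mathrm{rot}(A|b)=A$. Standing setting: $d=d_1+d_2$; $\mathcal S<\mathrm E(d_2)$ is a space group with translation subgroup $\mathcal T_{\mathcal S}$; $A\oplus(B|b)=(\mathrm{diag}(A,B)|(0,b))$; $\mathcal G$ is a discrete subgroup of $\mathrm E(d)$ contained in $\{A\oplus s:A\in\mathrm O(d_1),s\in\mathcal S\}$ projecting onto $\mathcal S$; $\mathcal T\subset\mathcal G$ maps bijectively onto $\mathcal T_{\mathcal S}$. There is $m_0\in\mathbb N$ such that $\mathcal T^N=\{t^N:t\in\mathcal T\}$ is a normal subgroup iff $N\in\mathcal M=m_0\mathbb N$, then isomorphic to $\mathbb Z^{d_2}$ of finite index; $\mathcal C_N$ is a fixed set of representatives of $\mathcal G/\mathcal T^N$. $U_{\mathrm{per}}$: maps $u:\mathcal G\to\mathbb R^d$ that are $\mathcal T^N$-periodic ($u(gt)=u(g)$ for $t\in\mathcal T^N$) for some $N\in\mathcal M$. $x_0\in\mathbb R^d$ with $g\mapsto g\cdot x_0$ injective; $d_{\mathrm{aff}}=\dim\mathrm{aff}(\mathcal G\cdot x_0)$; assumed $\mathcal G\cdot x_0\subset\{0_{d-d_{\mathrm{aff}}}\}\times\mathbb R^{d_{\mathrm{aff}}}$ and $\mathcal G$ acts trivially on $\mathbb R^{d-d_{\mathrm{aff}}}\times\{0\}$.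 For $\mathcal R\subset\mathcal G$, $U_{\mathrm{iso}}(\mathcal R)$: maps $v:\mathcal R\to\mathbb R^d$ with $a\in\mathbb R^d$, $S\in\mathrm{Skew}(d)$ such that $\mathrm{rot}(g)v(g)=a+S(g\cdot x_0-x_0)$ on $\mathcal R$. For finite $\mathcal R$ and $\mathcal T^N$-periodic $u$: $\|u\|_{\mathcal R}=\big(\frac1{|\mathcal C_N|}\sum_{g\in\mathcal C_N}\mathrm{dist}(u(g\,\cdot)|_{\mathcal R},U_{\mathrm{iso}}(\mathcal R))^2\big)^{1/2}$. $U_{\mathrm{iso},0,0}$: maps $u:\mathcal G\to\mathbb R^d$ with $a\in\mathbb R^d$, $S\in\mathrm{Skew}(d_1)$ such that $\mathrm{rot}(g)u(g)=a+(S\oplus0_{d_2\times d_2})(g\cdot x_0-x_0)$ for all $g\in\mathcal G$. Property 1: $\mathcal R$ finite, $\mathrm{id}\in\mathcal R$, $\mathrm{aff}(\mathcal R\cdot x_0)=\mathrm{aff}(\mathcal G\cdot x_0)$. Property 2: $\mathcal R$ finite, and there are $\mathcal R',\mathcal R''$ with $\mathrm{id}\in\mathcal R'$, $\mathcal R'$ generating $\mathcal G$, $\mathcal R''$ with Property 1, and $\{gh:g\in\mathcal R',h\in\mathcal R''\}\subset\mathcal R$. *)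

theory Defs
  imports "Jordan_Normal_Form.Matrix" "HOL-Library.FuncSet"
begin

type_synonym euc = "real mat \<times> real vec"

definition orth_group :: "nat \<Rightarrow> real mat set" where
  "orth_group n = {A \<in> carrier_mat n n. A\<^sup>T * A = 1\<^sub>m n}"

definition skew :: "nat \<Rightarrow> real mat set" where
  "skew n = {S \<in> carrier_mat n n. S\<^sup>T = - S}"

definition eucl :: "nat \<Rightarrow> euc set" where
  "eucl n = {(A, b). A \<in> orth_group n \<and> b \<in> carrier_vec n}"

definition rot :: "euc \<Rightarrow> real mat" where
  "rot g = fst g"

definition emult :: "euc \<Rightarrow> euc \<Rightarrow> euc" where
  "emult g h = (fst g * fst h, snd g + fst g *\<^sub>v snd h)"

definition eid :: "nat \<Rightarrow> euc" where
  "eid n = (1\<^sub>m n, 0\<^sub>v n)"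

definition einv :: "euc \<Rightarrow> euc" where
  "einv g = ((fst g)\<^sup>T, - ((fst g)\<^sup>T *\<^sub>v snd g))"

definition eact :: "euc \<Rightarrow> real vec \<Rightarrow> real vec" where
  "eact g x = fst g *\<^sub>v x + snd g"

fun epow :: "nat \<Rightarrow> euc \<Rightarrow> nat \<Rightarrow> euc" where
  "epow n g 0 = eid n"
| "epow n g (Suc k) = emult g (epow n g k)"

definition esubgroup :: "nat \<Rightarrow> euc set \<Rightarrow> bool" where
  "esubgroup n H \<longleftrightarrow> H \<subseteq> eucl n \<and> eid n \<in> H \<and>
     (\<forall>g\<in>H. \<forall>h\<in>H. emult g h \<in> H) \<and> (\<forall>g\<in>H. einv g \<in> H)"

definition enormal :: "nat \<Rightarrow> euc set \<Rightarrow> euc set \<Rightarrow> bool" where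
  "enormal n H G \<longleftrightarrow> esubgroup n H \<and> H \<subseteq> G \<and>
     (\<forall>g\<in>G. \<forall>h\<in>H. emult (emult g h) (einv g) \<in> H)"

definition eclose :: "nat \<Rightarrow> real \<Rightarrow> euc \<Rightarrow> euc \<Rightarrow> bool" where
  "eclose n \<epsilon> g h \<longleftrightarrow> (\<forall>i<n. \<forall>j<n. \<bar>fst g $$ (i,j) - fst h $$ (i,j)\<bar> < \<epsilon>)
                       \<and> (\<forall>i<n. \<bar>snd g $ i - snd h $ i\<bar> < \<epsilon>)"

text \<open>Discrete subgroup of E(n): the identity is isolated (equivalent to discreteness
  of the subgroup in the topological group E(n)).\<close>
definition discrete_esubgroup :: "nat \<Rightarrow> euc set \<Rightarrow> bool" where
  "discrete_esubgroup n G \<longleftrightarrow> esubgroup n G \<and>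
     (\<exists>\<epsilon>>0. \<forall>g\<in>G. eclose n \<epsilon> g (eid n) \<longrightarrow> g = eid n)"

inductive_set egen :: "nat \<Rightarrow> euc set \<Rightarrow> euc set" for n X where
  egen_id: "eid n \<in> egen n X"
| egen_base: "x \<in> X \<Longrightarrow> x \<in> egen n X"
| egen_mult: "g \<in> egen n X \<Longrightarrow> h \<in> egen n X \<Longrightarrow> emult g h \<in> egen n X"
| egen_inv: "g \<in> egen n X \<Longrightarrow> einv g \<in> egen n X"

definition lin_indep_vecs :: "nat \<Rightarrow> real vec list \<Rightarrow> bool" where
  "lin_indep_vecs n vs \<longleftrightarrow> (\<forall>c :: nat \<Rightarrow> real.
     (\<forall>j<n. (\<Sum>i<length vs. c i * (vs ! i) $ j) = 0) \<longrightarrow> (\<forall>i<length vs. c i = 0))"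

definition affhull :: "nat \<Rightarrow> real vec set \<Rightarrow> real vec set" where
  "affhull n X = {v \<in> carrier_vec n. \<exists>F (c :: real vec \<Rightarrow> real).
      finite F \<and> F \<noteq> {} \<and> F \<subseteq> X \<and> sum c F = 1 \<and>
      (\<forall>j<n. v $ j = (\<Sum>x\<in>F. c x * x $ j))}"

definition affdim :: "nat \<Rightarrow> real vec set \<Rightarrow> nat" where
  "affdim n X = (GREATEST k. \<exists>p\<in>X. \<exists>qs. set qs \<subseteq> X \<and> length qs = k \<and>
                    lin_indep_vecs n (map (\<lambda>q. q - p) qs))"

definition transl_sub :: "nat \<Rightarrow> euc set \<Rightarrow> euc set" where
  "transl_sub n S = {s \<in> S. rot s = 1\<^sub>m n}"

definition space_group :: "nat \<Rightarrow> euc set \<Rightarrow> bool" where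
  "space_group n S \<longleftrightarrow> discrete_esubgroup n S \<and>
     (\<exists>ts. set ts \<subseteq> transl_sub n S \<and> length ts = n \<and> lin_indep_vecs n (map snd ts))"

definition dsum :: "nat \<Rightarrow> nat \<Rightarrow> real mat \<Rightarrow> euc \<Rightarrow> euc" where
  "dsum d1 d2 A s = (four_block_mat A (0\<^sub>m d1 d2) (0\<^sub>m d2 d1) (fst s), 0\<^sub>v d1 @\<^sub>v snd s)"

definition mdsum :: "real mat \<Rightarrow> real mat \<Rightarrow> real mat" where
  "mdsum A B = four_block_mat A (0\<^sub>m (dim_row A) (dim_col B)) (0\<^sub>m (dim_row B) (dim_col A)) B"

definition eproj :: "nat \<Rightarrow> nat \<Rightarrow> euc \<Rightarrow> euc" where
  "eproj d1 d2 g = (mat d2 d2 (\<lambda>(i,j). fst g $$ (d1 + i, d1 + j)), vec d2 (\<lambda>i. snd g $ (d1 + i)))"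

definition TNpow :: "nat \<Rightarrow> euc set \<Rightarrow> nat \<Rightarrow> euc set" where
  "TNpow n T N = {epow n t N | t. t \<in> T}"

definition periodic :: "euc set \<Rightarrow> euc set \<Rightarrow> (euc \<Rightarrow> real vec) \<Rightarrow> bool" where
  "periodic G TN u \<longleftrightarrow> (\<forall>g\<in>G. \<forall>t\<in>TN. u (emult g t) = u g)"

definition U_iso :: "nat \<Rightarrow> real vec \<Rightarrow> euc set \<Rightarrow> (euc \<Rightarrow> real vec) set" where
  "U_iso d x0 R = {v \<in> extensional R. (\<forall>h\<in>R. v h \<in> carrier_vec d) \<and>
      (\<exists>a\<in>carrier_vec d. \<exists>S\<in>skew d. \<forall>h\<in>R. rot h *\<^sub>v v h = a + S *\<^sub>v (eact h x0 - x0))}"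

definition fdist :: "euc set \<Rightarrow> (euc \<Rightarrow> real vec) \<Rightarrow> (euc \<Rightarrow> real vec) \<Rightarrow> real" where
  "fdist R v w = sqrt (\<Sum>h\<in>R. (v h - w h) \<bullet> (v h - w h))"

definition setdist :: "euc set \<Rightarrow> (euc \<Rightarrow> real vec) \<Rightarrow> (euc \<Rightarrow> real vec) set \<Rightarrow> real" where
  "setdist R v U = Inf {fdist R v w | w. w \<in> U}"

definition seminormR :: "nat \<Rightarrow> real vec \<Rightarrow> euc set \<Rightarrow> euc set \<Rightarrow> (euc \<Rightarrow> real vec) \<Rightarrow> real" where
  "seminormR d x0 R C u = sqrt (1 / real (card C) *
      (\<Sum>g\<in>C. (setdist R (restrict (\<lambda>h. u (emult g h)) R) (U_iso d x0 R))\<^sup>2))"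

definition property1 :: "nat \<Rightarrow> real vec \<Rightarrow> euc set \<Rightarrow> euc set \<Rightarrow> bool" where
  "property1 d x0 G R \<longleftrightarrow> R \<subseteq> G \<and> finite R \<and> eid d \<in> R \<and>
     affhull d ((\<lambda>g. eact g x0) ` R) = affhull d ((\<lambda>g. eact g x0) ` G)"

definition property2 :: "nat \<Rightarrow> real vec \<Rightarrow> euc set \<Rightarrow> euc set \<Rightarrow> bool" where
  "property2 d x0 G R \<longleftrightarrow> R \<subseteq> G \<and> finite R \<and>
     (\<exists>R' R''. R' \<subseteq> G \<and> eid d \<in> R' \<and> egen d R' = G \<and> property1 d x0 G R'' \<and>
        {emult g h | g h. g \<in> R' \<and> h \<in> R''} \<subseteq> R)"


definition periods :: "nat \<Rightarrow> nat set" where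
  "periods m0 = {N. N \<ge> 1 \<and> m0 dvd N}"

definition U_per :: "nat \<Rightarrow> euc set \<Rightarrow> euc set \<Rightarrow> nat \<Rightarrow> (euc \<Rightarrow> real vec) set" where
  "U_per d G T m0 = {u \<in> extensional G. (\<forall>g\<in>G. u g \<in> carrier_vec d) \<and>
      (\<exists>N\<in>periods m0. periodic G (TNpow d T N) u)}"

text \<open>Kernel of the seminorm on U_per (for u T^N-periodic, the seminorm is computed
  with the representatives C N; it does not depend on the admissible N chosen).\<close>
definition kerR :: "nat \<Rightarrow> euc set \<Rightarrow> euc set \<Rightarrow> nat \<Rightarrow> (nat \<Rightarrow> euc set) \<Rightarrow> real vec
     \<Rightarrow> euc set \<Rightarrow> (euc \<Rightarrow> real vec) set" where
  "kerR d G T m0 C x0 R = {u \<in> U_per d G T m0. \<exists>N\<in>periods m0.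
      periodic G (TNpow d T N) u \<and> seminormR d x0 R (C N) u = 0}"

definition U_iso00 :: "nat \<Rightarrow> nat \<Rightarrow> euc set \<Rightarrow> real vec \<Rightarrow> (euc \<Rightarrow> real vec) set" where
  "U_iso00 d1 d2 G x0 = {u \<in> extensional G. (\<forall>g\<in>G. u g \<in> carrier_vec (d1 + d2)) \<and>
      (\<exists>a\<in>carrier_vec (d1 + d2). \<exists>S\<in>skew d1. \<forall>g\<in>G.
          rot g *\<^sub>v u g = a + mdsum S (0\<^sub>m d2 d2) *\<^sub>v (eact g x0 - x0))}"

definition param_dom :: "nat \<Rightarrow> nat \<Rightarrow> nat \<Rightarrow> (real vec \<times> real mat \<times> real mat) set" where
  "param_dom d d3 d4 = {(a, A1, A2). a \<in> carrier_vec d \<and> A1 \<in> carrier_mat d3 d4 \<and> A2 \<in> skew d4}"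

definition PhiMap :: "nat \<Rightarrow> nat \<Rightarrow> nat \<Rightarrow> euc set \<Rightarrow> real vec
     \<Rightarrow> real vec \<times> real mat \<times> real mat \<Rightarrow> (euc \<Rightarrow> real vec)" where
  "PhiMap d2 d3 d4 G x0 p = (case p of (a, A1, A2) \<Rightarrow>
     restrict (\<lambda>g. (rot g)\<^sup>T *\<^sub>v
        (a + mdsum (four_block_mat (0\<^sub>m d3 d3) A1 (- A1\<^sup>T) A2) (0\<^sub>m d2 d2) *\<^sub>v (eact g x0 - x0))) G)"

end

theory Submission
  imports Defs "Jordan_Normal_Form.Determinant"
begin

lemma orth_group_carrier: "A \<in> orth_group n \<Longrightarrow> A \<in> carrier_mat n n"
  by (simp add: orth_group_def)

lemma orth_group_transpose_mult: "A \<in> orth_group n \<Longrightarrow> A\<^sup>T * A = 1\<^sub>m n"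
  by (simp add: orth_group_def)

lemma orth_group_mult_transpose: "A \<in> orth_group n \<Longrightarrow> A * A\<^sup>T = 1\<^sub>m n"
  using mat_mult_left_right_inverse[of "A\<^sup>T" n A] by (auto simp: orth_group_def)

lemma eucl_rot: "g \<in> eucl n \<Longrightarrow> rot g \<in> orth_group n"
  by (auto simp: eucl_def rot_def)

lemma eucl_fst_carrier: "g \<in> eucl n \<Longrightarrow> fst g \<in> carrier_mat n n"
  by (auto simp: eucl_def orth_group_def)

lemma eucl_snd_carrier: "g \<in> eucl n \<Longrightarrow> snd g \<in> carrier_vec n"
  by (auto simp: eucl_def)

lemma rot_emult: "rot (emult g h) = rot g * rot h"
  by (simp add: rot_def emult_def)

lemma rot_eid: "rot (eid n) = 1\<^sub>m n"
  by (simp add: rot_def eid_def)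

lemma eact_eid: "x \<in> carrier_vec n \<Longrightarrow> eact (eid n) x = x"
  by (simp add: eact_def eid_def)

lemma emult_eid_left: "g \<in> eucl n \<Longrightarrow> emult (eid n) g = g"
  using eucl_fst_carrier[of g n] eucl_snd_carrier[of g n] by (cases g) (auto simp: emult_def eid_def)

lemma emult_eid_right: "g \<in> eucl n \<Longrightarrow> emult g (eid n) = g"
  using eucl_fst_carrier[of g n] eucl_snd_carrier[of g n] by (cases g) (auto simp: emult_def eid_def)

lemma emult_assoc:
  assumes "g \<in> eucl n" "h \<in> eucl n" "k \<in> eucl n"
  shows "emult (emult g h) k = emult g (emult h k)"
proof -
  have c: "fst g \<in> carrier_mat n n" "fst h \<in> carrier_mat n n" "fst k \<in> carrier_mat n n"
    "snd h \<in> carrier_vec n" "snd k \<in> carrier_vec n"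
    using assms eucl_fst_carrier eucl_snd_carrier by auto
  then show ?thesis
    by (simp add: emult_def assoc_mult_mat[of _ n n _ n _ n] mult_add_distrib_mat_vec[of _ n n]
        assoc_add_vec[of _ n] eucl_snd_carrier[OF assms(1)])
qed

lemma eact_emult:
  assumes "g \<in> eucl n" "h \<in> eucl n" "x \<in> carrier_vec n"
  shows "eact (emult g h) x = eact g (eact h x)"
proof -
  have "fst g \<in> carrier_mat n n" "fst h \<in> carrier_mat n n" "snd g \<in> carrier_vec n" "snd h \<in> carrier_vec n"
    using assms eucl_fst_carrier eucl_snd_carrier by auto
  with assms(3) show ?thesis
    by (simp add: eact_def emult_def mult_add_distrib_mat_vec[of _ n n]) (intro eq_vecI, auto)
qed

lemma eact_carrier: "g \<in> eucl n \<Longrightarrow> x \<in> carrier_vec n \<Longrightarrow> eact g x \<in> carrier_vec n"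
  using eucl_fst_carrier eucl_snd_carrier by (fastforce simp: eact_def)

lemma transpose_rot_mult_rot_vec:
  assumes g: "g \<in> eucl n" and v: "v \<in> carrier_vec n"
  shows "(rot g)\<^sup>T *\<^sub>v (rot g *\<^sub>v v) = v"
proof -
  have r: "rot g \<in> carrier_mat n n" "(rot g)\<^sup>T * rot g = 1\<^sub>m n"
    using eucl_rot[OF g] orth_group_carrier orth_group_transpose_mult by auto
  then show ?thesis using v by (simp flip: assoc_mult_mat_vec[of "(rot g)\<^sup>T" n n "rot g" n v])
qed

lemma rot_mult_transpose_rot_vec:
  assumes g: "g \<in> eucl n" and v: "v \<in> carrier_vec n"
  shows "rot g *\<^sub>v ((rot g)\<^sup>T *\<^sub>v v) = v"
proof -
  have r: "rot g \<in> carrier_mat n n" "rot g * (rot g)\<^sup>T = 1\<^sub>m n"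
    using eucl_rot[OF g] orth_group_carrier orth_group_mult_transpose by auto
  then show ?thesis using v by (simp flip: assoc_mult_mat_vec[of "rot g" n n "(rot g)\<^sup>T" n v])
qed

lemma mult_mat_vec_uminus:
  fixes A :: "real mat"
  assumes A: "A \<in> carrier_mat n m" and v: "v \<in> carrier_vec m"
  shows "A *\<^sub>v (- v) = - (A *\<^sub>v v)"
proof (intro eq_vecI)
  fix i assume "i < dim_vec (- (A *\<^sub>v v))"
  then have "i < n" using A by simp
  moreover have "(\<Sum>l = 0..<m. A $$ (i, l) * (- v) $ l) = (\<Sum>l = 0..<m. - (A $$ (i, l) * v $ l))"
    using v by (intro sum.cong) auto
  ultimately show "(A *\<^sub>v (- v)) $ i = (- (A *\<^sub>v v)) $ i"
    using A v by (simp add: scalar_prod_def sum_negf)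
qed (use A in auto)

lemma mult_mat_vec_zero [simp]: "A \<in> carrier_mat n m \<Longrightarrow> A *\<^sub>v 0\<^sub>v m = (0\<^sub>v n :: real vec)"
  by (intro eq_vecI) (auto simp: scalar_prod_def)

lemma zero_mult_mat_vec [simp]: "v \<in> carrier_vec m \<Longrightarrow> 0\<^sub>m n m *\<^sub>v v = (0\<^sub>v n :: real vec)"
  by (intro eq_vecI) (auto simp: scalar_prod_def intro!: sum.neutral)

lemma skew_carrier: "S \<in> skew n \<Longrightarrow> S \<in> carrier_mat n n"
  by (simp add: skew_def)

lemma skew_iff_index:
  "M \<in> skew n \<longleftrightarrow> M \<in> carrier_mat n n \<and> (\<forall>i<n. \<forall>j<n. M $$ (j, i) = - M $$ (i, j))"
proof
  assume "M \<in> skew n"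
  then have M: "M \<in> carrier_mat n n" and T: "M\<^sup>T = - M" by (auto simp: skew_def)
  have "M $$ (j, i) = - M $$ (i, j)" if "i < n" "j < n" for i j
  proof -
    have "M $$ (j, i) = M\<^sup>T $$ (i, j)" using M that by simp
    also have "\<dots> = - M $$ (i, j)" using M that by (simp add: T)
    finally show ?thesis .
  qed
  with M show "M \<in> carrier_mat n n \<and> (\<forall>i<n. \<forall>j<n. M $$ (j, i) = - M $$ (i, j))" by blast
next
  assume H: "M \<in> carrier_mat n n \<and> (\<forall>i<n. \<forall>j<n. M $$ (j, i) = - M $$ (i, j))"
  then have M: "M \<in> carrier_mat n n" by blast
  have "M\<^sup>T = - M"
  proof (rule eq_matI)
    fix i j assume "i < dim_row (- M)" "j < dim_col (- M)"
    then have ij: "i < n" "j < n" using M by auto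
    have "M\<^sup>T $$ (i, j) = M $$ (j, i)" using M ij by simp
    also have "\<dots> = - M $$ (i, j)" using H ij by blast
    finally show "M\<^sup>T $$ (i, j) = (- M) $$ (i, j)" using M ij by simp
  qed (use M in auto)
  with M show "M \<in> skew n" by (simp add: skew_def)
qed

lemma skew_index:
  assumes "S \<in> skew n" "i < n" "j < n"
  shows "S $$ (j, i) = - S $$ (i, j)"
  using assms unfolding skew_iff_index by blast

lemma emult_einv_right: assumes g: "g \<in> eucl n" shows "emult g (einv g) = eid n"
proof -
  have "fst g *\<^sub>v (- ((fst g)\<^sup>T *\<^sub>v snd g)) = - snd g"
    using rot_mult_transpose_rot_vec[OF g eucl_snd_carrier[OF g]] eucl_fst_carrier[OF g]
      eucl_snd_carrier[OF g] by (simp add: mult_mat_vec_uminus[of _ n n] rot_def)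
  then show ?thesis
    using orth_group_mult_transpose[OF eucl_rot[OF g]] eucl_snd_carrier[OF g]
    by (simp add: emult_def einv_def eid_def rot_def)
qed

lemma emult_einv_left: assumes g: "g \<in> eucl n" shows "emult (einv g) g = eid n"
proof -
  have "- ((fst g)\<^sup>T *\<^sub>v snd g) + (fst g)\<^sup>T *\<^sub>v snd g = 0\<^sub>v n"
    using eucl_fst_carrier[OF g] eucl_snd_carrier[OF g] by (intro eq_vecI) auto
  then show ?thesis
    using orth_group_transpose_mult[OF eucl_rot[OF g]] by (simp add: emult_def einv_def eid_def rot_def)
qed

lemma einv_einv: assumes g: "g \<in> eucl n" shows "einv (einv g) = g"
proof -
  have "fst g *\<^sub>v (- ((fst g)\<^sup>T *\<^sub>v snd g)) = - snd g"
    using rot_mult_transpose_rot_vec[OF g eucl_snd_carrier[OF g]] eucl_fst_carrier[OF g]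
      eucl_snd_carrier[OF g] by (simp add: mult_mat_vec_uminus[of _ n n] rot_def)
  then show ?thesis by (cases g) (simp add: einv_def)
qed

lemma esubgroup_eucl: "esubgroup n G \<Longrightarrow> g \<in> G \<Longrightarrow> g \<in> eucl n"
  by (auto simp: esubgroup_def)

lemma esubgroup_eid: "esubgroup n G \<Longrightarrow> eid n \<in> G"
  by (auto simp: esubgroup_def)

lemma esubgroup_emult: "esubgroup n G \<Longrightarrow> g \<in> G \<Longrightarrow> h \<in> G \<Longrightarrow> emult g h \<in> G"
  by (auto simp: esubgroup_def)

lemma esubgroup_einv: "esubgroup n G \<Longrightarrow> g \<in> G \<Longrightarrow> einv g \<in> G"
  by (auto simp: esubgroup_def)

lemma esubgroup_epow: "esubgroup n G \<Longrightarrow> g \<in> G \<Longrightarrow> epow n g k \<in> G"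
  by (induction k) (auto simp: esubgroup_eid esubgroup_emult)

lemma epow_add:
  assumes G: "esubgroup n G" and g: "g \<in> G"
  shows "epow n g (a + b) = emult (epow n g a) (epow n g b)"
proof (induction a)
  case 0
  show ?case using emult_eid_left esubgroup_eucl[OF G esubgroup_epow[OF G g]] by simp
next
  case (Suc a)
  then show ?case
    using emult_assoc[of g n "epow n g a" "epow n g b"] esubgroup_eucl[OF G] esubgroup_epow[OF G] g
    by simp
qed

lemma epow_mult:
  assumes "esubgroup n G" and "g \<in> G"
  shows "epow n g (a * b) = epow n (epow n g a) b"
proof (induction b)
  case (Suc b)
  have "epow n g (a * Suc b) = emult (epow n g a) (epow n g (a * b))"
    unfolding mult_Suc_right by (rule epow_add[OF assms])
  then show ?case by (simp add: Suc)
qed simp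

lemma rot_epow_eq_one: "rot g = 1\<^sub>m n \<Longrightarrow> rot (epow n g k) = 1\<^sub>m n"
  by (induction k) (simp_all add: rot_eid rot_emult)

lemma dsum_mult_append:
  assumes "A \<in> carrier_mat d1 d1" "B \<in> carrier_mat d2 d2" "x \<in> carrier_vec d1" "y \<in> carrier_vec d2"
  shows "fst (dsum d1 d2 A (B, b)) *\<^sub>v (x @\<^sub>v y) = (A *\<^sub>v x) @\<^sub>v (B *\<^sub>v y)"
  using assms by (simp add: dsum_def mult_mat_vec_split)

lemma eproj_dsum:
  assumes "A \<in> carrier_mat d1 d1" "B \<in> carrier_mat d2 d2" "b \<in> carrier_vec d2"
  shows "eproj d1 d2 (dsum d1 d2 A (B, b)) = (B, b)"
  using assms by (auto simp: eproj_def dsum_def intro!: eq_matI eq_vecI)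

lemma snd_epow_dsum_transl:
  assumes A: "A \<in> carrier_mat d1 d1" and b: "b \<in> carrier_vec d2"
  shows "snd (epow (d1 + d2) (dsum d1 d2 A (1\<^sub>m d2, b)) k) = 0\<^sub>v d1 @\<^sub>v (real k \<cdot>\<^sub>v b)"
proof (induction k)
  case 0
  show ?case using b by (auto simp: eid_def intro!: eq_vecI)
next
  case (Suc k)
  let ?t = "dsum d1 d2 A (1\<^sub>m d2, b)"
  have "fst ?t *\<^sub>v (0\<^sub>v d1 @\<^sub>v (real k \<cdot>\<^sub>v b)) = 0\<^sub>v d1 @\<^sub>v (real k \<cdot>\<^sub>v b)"
    using A b by (simp add: dsum_mult_append)
  then have "snd (epow (d1 + d2) ?t (Suc k)) = (0\<^sub>v d1 @\<^sub>v b) + (0\<^sub>v d1 @\<^sub>v (real k \<cdot>\<^sub>v b))"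
    using Suc by (simp add: emult_def dsum_def)
  also have "\<dots> = 0\<^sub>v d1 @\<^sub>v (real (Suc k) \<cdot>\<^sub>v b)"
    using b by (intro eq_vecI) (auto simp: distrib_right)
  finally show ?case .
qed

lemma mdsum_carrier:
  "A \<in> carrier_mat n1 n1 \<Longrightarrow> B \<in> carrier_mat n2 n2 \<Longrightarrow> mdsum A B \<in> carrier_mat (n1 + n2) (n1 + n2)"
  by (simp add: mdsum_def)

lemma mdsum_zero_index:
  assumes "A \<in> carrier_mat n1 n1" "i < n1 + n2" "j < n1 + n2"
  shows "mdsum A (0\<^sub>m n2 n2) $$ (i, j) = (if i < n1 \<and> j < n1 then A $$ (i, j) else (0::real))"
  using assms by (simp add: mdsum_def)

lemma mdsum_zero_mult_append:
  assumes A: "A \<in> carrier_mat n1 n1" and y: "y \<in> carrier_vec n2"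
  shows "mdsum A (0\<^sub>m n2 n2) *\<^sub>v (0\<^sub>v n1 @\<^sub>v y) = (0\<^sub>v (n1 + n2) :: real vec)"
proof -
  have "mdsum A (0\<^sub>m n2 n2) = four_block_mat A (0\<^sub>m n1 n2) (0\<^sub>m n2 n1) (0\<^sub>m n2 n2)"
    using A by (simp add: mdsum_def)
  also have "\<dots> *\<^sub>v (0\<^sub>v n1 @\<^sub>v y) = A *\<^sub>v 0\<^sub>v n1 @\<^sub>v 0\<^sub>m n2 n2 *\<^sub>v y"
    using A y by (intro mult_mat_vec_split) auto
  also have "\<dots> = 0\<^sub>v (n1 + n2)"
    using A y by (intro eq_vecI) auto
  finally show ?thesis .
qed

lemma mdsum_zero_skew:
  assumes S: "S \<in> skew n1"
  shows "mdsum S (0\<^sub>m n2 n2) \<in> skew (n1 + n2)"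
proof -
  have c: "S \<in> carrier_mat n1 n1" using S by (simp add: skew_def)
  have "mdsum S (0\<^sub>m n2 n2) $$ (j, i) = - mdsum S (0\<^sub>m n2 n2) $$ (i, j)"
    if "i < n1 + n2" "j < n1 + n2" for i j
    using that skew_index[OF S, of i j] by (simp add: mdsum_zero_index[OF c])
  with mdsum_carrier[OF c zero_carrier_mat] show ?thesis
    unfolding skew_iff_index by (intro conjI allI impI)
qed

lemma mdsum_zero_add:
  assumes "A \<in> carrier_mat n1 n1" "B \<in> carrier_mat n1 n1"
  shows "mdsum (A + B) (0\<^sub>m n2 n2) = mdsum A (0\<^sub>m n2 n2) + mdsum B (0\<^sub>m n2 n2 :: real mat)"
  using assms by (intro eq_matI) (simp_all add: mdsum_zero_index mdsum_def)

lemma mdsum_zero_smult: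
  assumes "A \<in> carrier_mat n1 n1"
  shows "mdsum (c \<cdot>\<^sub>m A) (0\<^sub>m n2 n2) = c \<cdot>\<^sub>m mdsum A (0\<^sub>m n2 n2 :: real mat)"
  using assms by (intro eq_matI) (simp_all add: mdsum_zero_index mdsum_def)


lemma mult_mat_vec_index:
  "A \<in> carrier_mat n k \<Longrightarrow> v \<in> carrier_vec k \<Longrightarrow> i < n \<Longrightarrow>
    (A *\<^sub>v v) $ i = (\<Sum>l<k. A $$ (i, l) * v $ l)"
  by (auto simp: scalar_prod_def lessThan_atLeast0 intro!: sum.cong)

lemma mult_mat_vec_unit_vec_index:
  fixes M :: "real mat"
  assumes "M \<in> carrier_mat n n" "k < n" "j < n"
  shows "(M *\<^sub>v unit_vec n j) $ k = M $$ (k, j)"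
proof -
  have "(M *\<^sub>v unit_vec n j) $ k = (\<Sum>l<n. if l = j then M $$ (k, l) else 0)"
    using assms by (simp add: mult_mat_vec_index)
  then show ?thesis using assms by simp
qed

lemma mult_mat_vec_lincomb:
  fixes M :: "real mat"
  assumes M: "M \<in> carrier_mat n n" and I: "finite I" and x: "\<And>i. i \<in> I \<Longrightarrow> x i \<in> carrier_vec n"
    and y: "y \<in> carrier_vec n" and comb: "\<And>l. l < n \<Longrightarrow> y $ l = (\<Sum>i\<in>I. c i * x i $ l)"
    and k: "k < n"
  shows "(M *\<^sub>v y) $ k = (\<Sum>i\<in>I. c i * (M *\<^sub>v x i) $ k)"
proof -
  have "(M *\<^sub>v y) $ k = (\<Sum>l<n. \<Sum>i\<in>I. c i * (M $$ (k, l) * x i $ l))"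
    using mult_mat_vec_index[OF M y k] comb by (simp add: sum_distrib_left mult.left_commute)
  also have "\<dots> = (\<Sum>i\<in>I. c i * (M *\<^sub>v x i) $ k)"
    using mult_mat_vec_index[OF M x k] by (subst sum.swap) (simp add: sum_distrib_left)
  finally show ?thesis .
qed

lemma square_mat_right_inverse_if_inj:
  fixes Q :: "real mat"
  assumes Q: "Q \<in> carrier_mat k k"
    and inj: "\<And>v. v \<in> carrier_vec k \<Longrightarrow> Q *\<^sub>v v = 0\<^sub>v k \<Longrightarrow> v = 0\<^sub>v k"
  shows "\<exists>B \<in> carrier_mat k k. Q * B = 1\<^sub>m k"
proof -
  have "det Q \<noteq> 0" using det_0_iff_vec_prod_zero_field[OF Q] inj by blast
  from det_non_zero_imp_unit[OF Q this, of "()"] show ?thesis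
    unfolding Units_def ring_mat_def by auto
qed

text \<open>Independent vectors vanishing on the first m coordinates, as many as there are remaining
  coordinates, span all vectors on those coordinates: their square coordinate matrix is injective.\<close>

lemma lin_indep_vecs_span_tail:
  fixes vs :: "real vec list"
  assumes li: "lin_indep_vecs n vs" and len: "length vs + m = n"
    and head: "\<And>v j. v \<in> set vs \<Longrightarrow> j < m \<Longrightarrow> v $ j = 0"
  shows "\<exists>c. \<forall>j. m \<le> j \<and> j < n \<longrightarrow> y $ j = (\<Sum>i<length vs. c i * vs ! i $ j)"
proof -
  define k where "k = length vs"
  define Q where "Q = mat k k (\<lambda>(a, i). vs ! i $ (m + a))"
  have Qc: "Q \<in> carrier_mat k k" by (simp add: Q_def)
  have Q_index: "(Q *\<^sub>v v) $ (j - m) = (\<Sum>i<k. v $ i * vs ! i $ j)"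
    if v: "v \<in> carrier_vec k" and j: "m \<le> j" "j < n" for v j
    using mult_mat_vec_index[OF Qc v, of "j - m"] j len
    by (simp add: k_def Q_def mult.commute)
  have inj: "v = 0\<^sub>v k" if v: "v \<in> carrier_vec k" and Qv: "Q *\<^sub>v v = 0\<^sub>v k" for v
  proof -
    have "(\<Sum>i<k. v $ i * vs ! i $ j) = 0" if j: "j < n" for j
    proof (cases "j < m")
      case True
      then show ?thesis using head by (auto simp: k_def intro!: sum.neutral)
    next
      case False
      then show ?thesis using Q_index[OF v _ j] Qv j len by (simp add: k_def)
    qed
    then have "\<forall>i<k. v $ i = 0" using li unfolding lin_indep_vecs_def k_def by blast
    then show ?thesis using v by (intro eq_vecI) auto
  qed
  obtain B where B: "B \<in> carrier_mat k k" "Q * B = 1\<^sub>m k"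
    using square_mat_right_inverse_if_inj[OF Qc] inj by blast
  define yv where "yv = vec k (\<lambda>a. y $ (m + a))"
  define cv where "cv = B *\<^sub>v yv"
  have cvc: "cv \<in> carrier_vec k" using B by (simp add: cv_def yv_def)
  have "Q *\<^sub>v cv = (Q * B) *\<^sub>v yv"
    using B(1) Qc by (simp add: cv_def yv_def)
  also have "\<dots> = yv" using B(2) by (simp add: yv_def)
  finally have "Q *\<^sub>v cv = yv" .
  have "y $ j = (\<Sum>i<length vs. cv $ i * vs ! i $ j)" if "m \<le> j" "j < n" for j
  proof -
    have "m + (j - m) = j" using that by simp
    then show ?thesis using Q_index[OF cvc that] \<open>Q *\<^sub>v cv = yv\<close> that len
      by (simp add: yv_def k_def)
  qed
  then show ?thesis by blast
qed

lemma lin_indep_vecs_take: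
  fixes vs :: "real vec list"
  assumes li: "lin_indep_vecs n vs"
  shows "lin_indep_vecs n (take k vs)"
  unfolding lin_indep_vecs_def
proof (intro allI impI)
  fix c :: "nat \<Rightarrow> real" and i
  assume h: "\<forall>j<n. (\<Sum>i<length (take k vs). c i * take k vs ! i $ j) = 0" and i: "i < length (take k vs)"
  define c' where "c' = (\<lambda>i. if i < k then c i else 0)"
  have "(\<Sum>i<length vs. c' i * vs ! i $ j) = (\<Sum>i<length (take k vs). c i * take k vs ! i $ j)" for j
    by (rule sum.mono_neutral_cong_right) (auto simp: c'_def)
  then have "\<forall>i<length vs. c' i = 0"
    using li[unfolded lin_indep_vecs_def, rule_format, of c'] h by simp
  then show "c i = 0" using i unfolding c'_def by auto
qed

text \<open>Otherwise the first n vectors would span \<real>^n and express the next one.\<close>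

lemma lin_indep_vecs_length_le:
  fixes vs :: "real vec list"
  assumes li: "lin_indep_vecs n vs"
  shows "length vs \<le> n"
proof (rule ccontr)
  assume "\<not> length vs \<le> n"
  then have L: "n < length vs" by simp
  define ws where "ws = take n vs"
  have lws: "length ws = n" using L by (simp add: ws_def)
  obtain c where c: "\<forall>j. 0 \<le> j \<and> j < n \<longrightarrow> vs ! n $ j = (\<Sum>i<length ws. c i * ws ! i $ j)"
    using lin_indep_vecs_span_tail[OF lin_indep_vecs_take[OF li], of n 0 "vs ! n"] lws
    by (auto simp: ws_def)
  define c' where "c' = (\<lambda>i. if i < n then c i else if i = n then -1 else (0::real))"
  have "(\<Sum>i<length vs. c' i * vs ! i $ j) = 0" if j: "j < n" for j
  proof -
    have "(\<Sum>i<length vs. c' i * vs ! i $ j) = (\<Sum>i<Suc n. c' i * vs ! i $ j)"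
      using L by (intro sum.mono_neutral_right) (auto simp: c'_def)
    also have "\<dots> = (\<Sum>i<length ws. c i * ws ! i $ j) - vs ! n $ j"
      using lws by (simp add: c'_def ws_def)
    finally show ?thesis using c j by simp
  qed
  then have "c' n = 0" using li L unfolding lin_indep_vecs_def by blast
  then show False by (simp add: c'_def)
qed

lemma smult_mat_mult_mat_vec:
  fixes A :: "real mat"
  assumes "A \<in> carrier_mat n m" "v \<in> carrier_vec m"
  shows "(c \<cdot>\<^sub>m A) *\<^sub>v v = c \<cdot>\<^sub>v (A *\<^sub>v v)"
  using assms by (intro eq_vecI) auto

lemma add_left_cancel_vec:
  fixes a x y :: "real vec"
  assumes "a \<in> carrier_vec n" "x \<in> carrier_vec n" "y \<in> carrier_vec n" "a + x = a + y"
  shows "x = y"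
proof (rule eq_vecI)
  fix i assume "i < dim_vec y"
  then show "x $ i = y $ i" using arg_cong[OF assms(4), of "\<lambda>v. v $ i"] assms(1-3) by simp
qed (use assms in simp)

lemma smult_vec_eq_zero_cancel:
  fixes x :: "real vec"
  assumes "c \<noteq> 0" "x \<in> carrier_vec n" "c \<cdot>\<^sub>v x = 0\<^sub>v n"
  shows "x = 0\<^sub>v n"
proof (rule eq_vecI)
  fix i assume "i < dim_vec (0\<^sub>v n :: real vec)"
  then show "x $ i = 0\<^sub>v n $ i" using arg_cong[OF assms(3), of "\<lambda>v. v $ i"] assms(1,2) by simp
qed (use assms in simp)

lemma transpose_mult_skew_mult:
  fixes M Q :: "real mat"
  assumes M: "M \<in> skew n" and Q: "Q \<in> carrier_mat n n"
  shows "Q\<^sup>T * M * Q \<in> skew n"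
proof -
  have Mc: "M \<in> carrier_mat n n" and MT: "M\<^sup>T = - M" using M by (auto simp: skew_def)
  have "(Q\<^sup>T * M * Q)\<^sup>T = Q\<^sup>T * (M\<^sup>T * Q)"
    using Mc Q by (simp add: transpose_mult[of _ n n _ n])
  also have "\<dots> = - (Q\<^sup>T * M * Q)"
    unfolding MT using Mc Q by (simp add: assoc_mult_mat[of _ n n _ n _ n])
  finally show ?thesis using Mc Q by (simp add: skew_def)
qed

lemma mdsum_eq_if_skew_kills_tail:
  fixes M :: "real mat"
  assumes M: "M \<in> skew (n1 + n2)"
    and kills: "\<And>y. y \<in> carrier_vec n2 \<Longrightarrow> M *\<^sub>v (0\<^sub>v n1 @\<^sub>v y) = 0\<^sub>v (n1 + n2)"
  shows "\<exists>S \<in> skew n1. M = mdsum S (0\<^sub>m n2 n2)"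
proof -
  have Mc: "M \<in> carrier_mat (n1 + n2) (n1 + n2)" using M by (rule skew_carrier)
  have col: "M $$ (i, j) = 0" if i: "i < n1 + n2" and j: "n1 \<le> j" "j < n1 + n2" for i j
  proof -
    have u: "unit_vec (n1 + n2) j = 0\<^sub>v n1 @\<^sub>v unit_vec n2 (j - n1)"
      using j by (intro eq_vecI) auto
    have "M *\<^sub>v unit_vec (n1 + n2) j = 0\<^sub>v (n1 + n2)" unfolding u by (rule kills) simp
    then show ?thesis using mult_mat_vec_unit_vec_index[OF Mc i j(2)] i by simp
  qed
  define S where "S = mat n1 n1 (\<lambda>(i, j). M $$ (i, j))"
  have Sc: "S \<in> carrier_mat n1 n1" by (simp add: S_def)
  have S_index: "S $$ (i, j) = M $$ (i, j)" if "i < n1" "j < n1" for i j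
    using that by (simp add: S_def)
  have "M $$ (i, j) = mdsum S (0\<^sub>m n2 n2) $$ (i, j)" if ij: "i < n1 + n2" "j < n1 + n2" for i j
  proof (cases "n1 \<le> j")
    case False
    show ?thesis
    proof (cases "n1 \<le> i")
      case True
      have "M $$ (i, j) = - M $$ (j, i)" using skew_index[OF M ij(2) ij(1)] .
      then show ?thesis using col[OF ij(2) True ij(1)] True ij by (simp add: mdsum_zero_index[OF Sc])
    qed (use False ij in \<open>simp add: mdsum_zero_index[OF Sc] S_index\<close>)
  qed (use col ij in \<open>simp add: mdsum_zero_index[OF Sc]\<close>)
  then have MS: "M = mdsum S (0\<^sub>m n2 n2)"
    using Mc mdsum_carrier[OF Sc zero_carrier_mat, of n2] by (intro eq_matI) auto
  have "S $$ (j, i) = - S $$ (i, j)" if "i < n1" "j < n1" for i j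
    using skew_index[OF M, of i j] that by (simp add: S_index)
  then have "S \<in> skew n1" using Sc unfolding skew_iff_index by (intro conjI allI impI)
  with MS show ?thesis by blast
qed

definition block_skew :: "nat \<Rightarrow> real mat \<Rightarrow> real mat \<Rightarrow> real mat" where
  "block_skew n3 A1 A2 = four_block_mat (0\<^sub>m n3 n3) A1 (- A1\<^sup>T) A2"

lemma block_skew_carrier:
  "A1 \<in> carrier_mat n3 n4 \<Longrightarrow> A2 \<in> carrier_mat n4 n4 \<Longrightarrow>
    block_skew n3 A1 A2 \<in> carrier_mat (n3 + n4) (n3 + n4)"
  unfolding block_skew_def by (rule four_block_carrier_mat) auto

lemma block_skew_index:
  assumes "A1 \<in> carrier_mat n3 n4" "A2 \<in> carrier_mat n4 n4" "i < n3 + n4" "j < n3 + n4"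
  shows "block_skew n3 A1 A2 $$ (i, j) = (if i < n3 then (if j < n3 then 0 else A1 $$ (i, j - n3))
     else (if j < n3 then - A1 $$ (j, i - n3) else A2 $$ (i - n3, j - n3)))"
  using assms by (auto simp: block_skew_def)

lemma block_skew_skew:
  assumes A1: "A1 \<in> carrier_mat n3 n4" and A2: "A2 \<in> skew n4"
  shows "block_skew n3 A1 A2 \<in> skew (n3 + n4)"
proof -
  have A2c: "A2 \<in> carrier_mat n4 n4" using A2 by (rule skew_carrier)
  have "block_skew n3 A1 A2 $$ (j, i) = - block_skew n3 A1 A2 $$ (i, j)"
    if "i < n3 + n4" "j < n3 + n4" for i j
    using that skew_index[OF A2, of "i - n3" "j - n3"]
    by (simp add: block_skew_index[OF A1 A2c])
  with block_skew_carrier[OF A1 A2c] show ?thesis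
    unfolding skew_iff_index by (intro conjI allI impI)
qed

lemma block_skew_add:
  assumes A1: "A1 \<in> carrier_mat n3 n4" and A2: "A2 \<in> carrier_mat n4 n4"
    and B1: "B1 \<in> carrier_mat n3 n4" and B2: "B2 \<in> carrier_mat n4 n4"
  shows "block_skew n3 (A1 + B1) (A2 + B2) = block_skew n3 A1 A2 + block_skew n3 B1 B2"
proof (rule eq_matI)
  have AB1: "A1 + B1 \<in> carrier_mat n3 n4" and AB2: "A2 + B2 \<in> carrier_mat n4 n4" using A1 B1 A2 B2 by auto
  fix i j assume "i < dim_row (block_skew n3 A1 A2 + block_skew n3 B1 B2)"
    "j < dim_col (block_skew n3 A1 A2 + block_skew n3 B1 B2)"
  then have i: "i < n3 + n4" and j: "j < n3 + n4" using block_skew_carrier[OF B1 B2] by auto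
  show "block_skew n3 (A1 + B1) (A2 + B2) $$ (i, j) = (block_skew n3 A1 A2 + block_skew n3 B1 B2) $$ (i, j)"
    using block_skew_index[OF AB1 AB2 i j] block_skew_index[OF A1 A2 i j] block_skew_index[OF B1 B2 i j]
      i j A1 B1 A2 B2 block_skew_carrier[OF B1 B2] by auto
qed (use block_skew_carrier[OF A1 A2] block_skew_carrier[OF B1 B2] A1 B1 A2 B2
      block_skew_carrier[of "A1 + B1" n3 n4 "A2 + B2"] in auto)

lemma block_skew_smult:
  assumes A1: "A1 \<in> carrier_mat n3 n4" and A2: "A2 \<in> carrier_mat n4 n4"
  shows "block_skew n3 (c \<cdot>\<^sub>m A1) (c \<cdot>\<^sub>m A2) = c \<cdot>\<^sub>m block_skew n3 A1 A2"
proof (rule eq_matI)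
  have cA1: "c \<cdot>\<^sub>m A1 \<in> carrier_mat n3 n4" and cA2: "c \<cdot>\<^sub>m A2 \<in> carrier_mat n4 n4" using A1 A2 by auto
  fix i j assume "i < dim_row (c \<cdot>\<^sub>m block_skew n3 A1 A2)" "j < dim_col (c \<cdot>\<^sub>m block_skew n3 A1 A2)"
  then have i: "i < n3 + n4" and j: "j < n3 + n4" using block_skew_carrier[OF A1 A2] by auto
  show "block_skew n3 (c \<cdot>\<^sub>m A1) (c \<cdot>\<^sub>m A2) $$ (i, j) = (c \<cdot>\<^sub>m block_skew n3 A1 A2) $$ (i, j)"
    using block_skew_index[OF cA1 cA2 i j] block_skew_index[OF A1 A2 i j] i j A1 A2
      block_skew_carrier[OF A1 A2] by auto
qed (use block_skew_carrier[OF A1 A2] A1 A2 block_skew_carrier[of "c \<cdot>\<^sub>m A1" n3 n4 "c \<cdot>\<^sub>m A2"] in auto)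

lemma block_skew_eq_iff_last_cols:
  assumes "A1 \<in> carrier_mat n3 n4" "A2 \<in> carrier_mat n4 n4" "B1 \<in> carrier_mat n3 n4" "B2 \<in> carrier_mat n4 n4"
    and eq: "\<And>i j. i < n3 + n4 \<Longrightarrow> n3 \<le> j \<Longrightarrow> j < n3 + n4 \<Longrightarrow>
      block_skew n3 A1 A2 $$ (i, j) = block_skew n3 B1 B2 $$ (i, j)"
  shows "A1 = B1 \<and> A2 = B2"
proof
  show "A1 = B1"
  proof (rule eq_matI)
    fix i j assume "i < dim_row B1" "j < dim_col B1"
    then show "A1 $$ (i, j) = B1 $$ (i, j)"
      using eq[of i "n3 + j"] assms(1-4) by (simp add: block_skew_index)
  qed (use assms in auto)
  show "A2 = B2"
  proof (rule eq_matI)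
    fix i j assume "i < dim_row B2" "j < dim_col B2"
    then show "A2 $$ (i, j) = B2 $$ (i, j)"
      using eq[of "n3 + i" "n3 + j"] assms(1-4) by (simp add: block_skew_index)
  qed (use assms in auto)
qed

lemma skew_last_cols_eq_block_skew:
  assumes S: "S \<in> skew (n3 + n4)"
  shows "\<exists>A1 A2. A1 \<in> carrier_mat n3 n4 \<and> A2 \<in> skew n4 \<and>
    (\<forall>i j. i < n3 + n4 \<longrightarrow> n3 \<le> j \<longrightarrow> j < n3 + n4 \<longrightarrow> block_skew n3 A1 A2 $$ (i, j) = S $$ (i, j))"
proof (intro exI conjI allI impI)
  let ?A1 = "mat n3 n4 (\<lambda>(i, j). S $$ (i, n3 + j))"
  let ?A2 = "mat n4 n4 (\<lambda>(i, j). S $$ (n3 + i, n3 + j))"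
  show "?A1 \<in> carrier_mat n3 n4" by simp
  have "?A2 \<in> carrier_mat n4 n4" by simp
  moreover have "\<forall>i<n4. \<forall>j<n4. ?A2 $$ (j, i) = - ?A2 $$ (i, j)"
  proof (intro allI impI)
    fix i j assume "i < n4" "j < n4"
    then show "?A2 $$ (j, i) = - ?A2 $$ (i, j)" using skew_index[OF S, of "n3 + i" "n3 + j"] by simp
  qed
  ultimately show "?A2 \<in> skew n4" unfolding skew_iff_index by (rule conjI)
  fix i j assume ij: "i < n3 + n4" "n3 \<le> j" "j < n3 + n4"
  have "n3 + (j - n3) = j" using ij by simp
  then show "block_skew n3 ?A1 ?A2 $$ (i, j) = S $$ (i, j)"
    using ij block_skew_index[OF mat_carrier mat_carrier ij(1) ij(3)] by simp
qed

lemma scalar_prod_self_nonneg: "0 \<le> (v :: real vec) \<bullet> v"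
  unfolding scalar_prod_def by (intro sum_nonneg) auto

lemma fdist_nonneg: "0 \<le> fdist R w w'"
  unfolding fdist_def using scalar_prod_self_nonneg by (simp add: sum_nonneg)

lemma fdist_self:
  assumes "\<And>h. h \<in> R \<Longrightarrow> v h \<in> carrier_vec n"
  shows "fdist R v v = 0"
proof -
  have "v h - v h = 0\<^sub>v n" if "h \<in> R" for h using assms[OF that] by (intro eq_vecI) auto
  then show ?thesis unfolding fdist_def by simp
qed

lemma setdist_eq_0_if_mem:
  assumes "v \<in> U" "\<And>h. h \<in> R \<Longrightarrow> v h \<in> carrier_vec n"
  shows "setdist R v U = 0"
  unfolding setdist_def
proof (rule cInf_eq_minimum)
  show "0 \<in> {fdist R v w | w. w \<in> U}" using assms fdist_self[of R v n] by force
qed (use fdist_nonneg in blast)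

text \<open>Functionals F on fields R \<rightarrow> \<real>^n that are Lipschitz for the distance fdist R;
  their zero sets are closed.\<close>

definition fdist_lipschitz :: "nat \<Rightarrow> euc set \<Rightarrow> ((euc \<Rightarrow> real vec) \<Rightarrow> real) \<Rightarrow> bool" where
  "fdist_lipschitz n R F \<longleftrightarrow> (\<exists>M. \<forall>w w'. (\<forall>h\<in>R. w h \<in> carrier_vec n \<and> w' h \<in> carrier_vec n) \<longrightarrow>
      \<bar>F w - F w'\<bar> \<le> M * fdist R w w')"

lemma fdist_lipschitz_coord:
  assumes R: "finite R" and h: "h \<in> R" and i: "i < n"
  shows "fdist_lipschitz n R (\<lambda>w. w h $ i)"
  unfolding fdist_lipschitz_def
proof (intro exI[of _ 1] allI impI)
  fix w w' :: "euc \<Rightarrow> real vec"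
  assume c: "\<forall>h\<in>R. w h \<in> carrier_vec n \<and> w' h \<in> carrier_vec n"
  let ?x = "w h - w' h"
  have xc: "?x \<in> carrier_vec n" using c h by auto
  have "(?x $ i)\<^sup>2 \<le> (\<Sum>l\<in>{0..<n}. ?x $ l * ?x $ l)"
    using i by (simp add: power2_eq_square) (intro member_le_sum, auto)
  also have "\<dots> = ?x \<bullet> ?x" using xc by (simp only: scalar_prod_def carrier_vecD)
  also have "\<dots> \<le> (\<Sum>h'\<in>R. (w h' - w' h') \<bullet> (w h' - w' h'))"
    using h R scalar_prod_self_nonneg by (intro member_le_sum) auto
  finally have "sqrt ((?x $ i)\<^sup>2) \<le> fdist R w w'" unfolding fdist_def by (rule real_sqrt_le_mono)
  moreover have "w' h \<in> carrier_vec n" using c h by auto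
  then have "?x $ i = w h $ i - w' h $ i" using i by simp
  ultimately show "\<bar>w h $ i - w' h $ i\<bar> \<le> 1 * fdist R w w'" by simp
qed

lemma fdist_lipschitz_const: "fdist_lipschitz n R (\<lambda>w. c)"
  unfolding fdist_lipschitz_def by (intro exI[of _ 0]) simp

lemma fdist_lipschitz_add:
  assumes "fdist_lipschitz n R F" "fdist_lipschitz n R F'"
  shows "fdist_lipschitz n R (\<lambda>w. F w + F' w)"
proof -
  obtain M M' where M: "\<forall>w w'. (\<forall>h\<in>R. w h \<in> carrier_vec n \<and> w' h \<in> carrier_vec n) \<longrightarrow>
      \<bar>F w - F w'\<bar> \<le> M * fdist R w w'" and M': "\<forall>w w'. (\<forall>h\<in>R. w h \<in> carrier_vec n \<and> w' h \<in> carrier_vec n) \<longrightarrow>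
      \<bar>F' w - F' w'\<bar> \<le> M' * fdist R w w'" using assms unfolding fdist_lipschitz_def by blast
  show ?thesis unfolding fdist_lipschitz_def
  proof (intro exI[of _ "M + M'"] allI impI)
    fix w w' :: "euc \<Rightarrow> real vec" assume "\<forall>h\<in>R. w h \<in> carrier_vec n \<and> w' h \<in> carrier_vec n"
    then have "\<bar>F w - F w'\<bar> + \<bar>F' w - F' w'\<bar> \<le> M * fdist R w w' + M' * fdist R w w'"
      using M M' by (meson add_mono)
    then show "\<bar>F w + F' w - (F w' + F' w')\<bar> \<le> (M + M') * fdist R w w'"
      by (simp add: distrib_right)
  qed
qed

lemma fdist_lipschitz_scale:
  assumes "fdist_lipschitz n R F"
  shows "fdist_lipschitz n R (\<lambda>w. c * F w)"
proof -
  obtain M where M: "\<forall>w w'. (\<forall>h\<in>R. w h \<in> carrier_vec n \<and> w' h \<in> carrier_vec n) \<longrightarrow>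
      \<bar>F w - F w'\<bar> \<le> M * fdist R w w'" using assms unfolding fdist_lipschitz_def by blast
  show ?thesis unfolding fdist_lipschitz_def
  proof (intro exI[of _ "\<bar>c\<bar> * M"] allI impI)
    fix w w' :: "euc \<Rightarrow> real vec" assume "\<forall>h\<in>R. w h \<in> carrier_vec n \<and> w' h \<in> carrier_vec n"
    then have "\<bar>c\<bar> * \<bar>F w - F w'\<bar> \<le> \<bar>c\<bar> * (M * fdist R w w')" using M by (intro mult_left_mono) auto
    then show "\<bar>c * F w - c * F w'\<bar> \<le> \<bar>c\<bar> * M * fdist R w w'"
      by (simp add: abs_mult[symmetric] right_diff_distrib mult.assoc)
  qed
qed

lemma fdist_lipschitz_diff:
  "fdist_lipschitz n R F \<Longrightarrow> fdist_lipschitz n R F' \<Longrightarrow> fdist_lipschitz n R (\<lambda>w. F w - F' w)"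
  using fdist_lipschitz_add[of n R F "\<lambda>w. -1 * F' w"] fdist_lipschitz_scale[of n R F' "-1"] by simp

lemma fdist_lipschitz_sum:
  "finite I \<Longrightarrow> (\<And>i. i \<in> I \<Longrightarrow> fdist_lipschitz n R (F i)) \<Longrightarrow>
    fdist_lipschitz n R (\<lambda>w. \<Sum>i\<in>I. F i w)"
  by (induction I rule: finite_induct) (auto intro: fdist_lipschitz_const fdist_lipschitz_add)

lemma fdist_lipschitz_zero_if_setdist_zero:
  assumes F: "fdist_lipschitz n R F" and U0: "\<And>w. w \<in> U \<Longrightarrow> F w = 0"
    and U: "U \<noteq> {}" "\<And>w h. w \<in> U \<Longrightarrow> h \<in> R \<Longrightarrow> w h \<in> carrier_vec n"
    and v: "\<And>h. h \<in> R \<Longrightarrow> v h \<in> carrier_vec n" and sd: "setdist R v U = 0"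
  shows "F v = 0"
proof (rule ccontr)
  assume nz: "F v \<noteq> 0"
  obtain M where M: "\<forall>w w'. (\<forall>h\<in>R. w h \<in> carrier_vec n \<and> w' h \<in> carrier_vec n) \<longrightarrow>
      \<bar>F w - F w'\<bar> \<le> M * fdist R w w'" using F unfolding fdist_lipschitz_def by blast
  define e where "e = \<bar>F v\<bar> / (\<bar>M\<bar> + 1)"
  have "e > 0" using nz by (simp add: e_def)
  moreover have "bdd_below {fdist R v w | w. w \<in> U}" using fdist_nonneg by (intro bdd_belowI[of _ 0]) auto
  ultimately obtain w where w: "w \<in> U" "fdist R v w < e"
    using sd U(1) cInf_less_iff[of "{fdist R v w | w. w \<in> U}" e] unfolding setdist_def by auto
  have "\<bar>F v\<bar> = \<bar>F v - F w\<bar>" using U0 w(1) by simp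
  also have "\<dots> \<le> \<bar>M\<bar> * fdist R v w"
    using M v U(2)[OF w(1)] fdist_nonneg[of R v w] by (meson abs_ge_self dual_order.trans mult_right_mono)
  also have "\<dots> \<le> \<bar>M\<bar> * e" using w(2) by (intro mult_left_mono) auto
  also have "\<dots> < \<bar>F v\<bar>" using nz by (simp add: e_def field_simps)
  finally show False by simp
qed

definition affine_comb_map :: "nat \<Rightarrow> (real vec \<Rightarrow> real vec) \<Rightarrow> bool" where
  "affine_comb_map n f \<longleftrightarrow> (\<forall>y\<in>carrier_vec n. f y \<in> carrier_vec n) \<and>
     (\<forall>F c y. finite F \<and> F \<subseteq> carrier_vec n \<and> sum c F = 1 \<and> y \<in> carrier_vec n \<and>
        (\<forall>j<n. y $ j = (\<Sum>x\<in>F. c x * x $ j)) \<longrightarrow> (\<forall>j<n. f y $ j = (\<Sum>x\<in>F. c x * f x $ j)))"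

lemma affine_comb_mapI:
  assumes "\<And>y. y \<in> carrier_vec n \<Longrightarrow> f y \<in> carrier_vec n"
    and "\<And>F c y j. finite F \<Longrightarrow> F \<subseteq> carrier_vec n \<Longrightarrow> sum c F = 1 \<Longrightarrow> y \<in> carrier_vec n \<Longrightarrow>
      (\<And>j. j < n \<Longrightarrow> y $ j = (\<Sum>x\<in>F. c x * x $ j)) \<Longrightarrow> j < n \<Longrightarrow> f y $ j = (\<Sum>x\<in>F. c x * f x $ j)"
  shows "affine_comb_map n f"
  using assms unfolding affine_comb_map_def by blast

lemma affine_comb_mapD:
  assumes "affine_comb_map n f"
  shows "y \<in> carrier_vec n \<Longrightarrow> f y \<in> carrier_vec n"
    and "finite F \<Longrightarrow> F \<subseteq> carrier_vec n \<Longrightarrow> sum c F = 1 \<Longrightarrow> y \<in> carrier_vec n \<Longrightarrow>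
      (\<And>j. j < n \<Longrightarrow> y $ j = (\<Sum>x\<in>F. c x * x $ j)) \<Longrightarrow> j < n \<Longrightarrow> f y $ j = (\<Sum>x\<in>F. c x * f x $ j)"
  using assms unfolding affine_comb_map_def by blast+

lemma affine_comb_map_id: "affine_comb_map n (\<lambda>y. y)"
  by (rule affine_comb_mapI)

lemma affine_comb_map_const:
  assumes "q \<in> carrier_vec n" shows "affine_comb_map n (\<lambda>y. q)"
  using assms by (intro affine_comb_mapI) (simp_all flip: sum_distrib_right)

lemma affine_comb_map_add:
  assumes f: "affine_comb_map n f" and g: "affine_comb_map n g"
  shows "affine_comb_map n (\<lambda>y. f y + g y)"
proof (rule affine_comb_mapI)
  fix F c and y :: "real vec" and j assume F: "finite F" "F \<subseteq> carrier_vec n" "sum c F = 1" and y: "y \<in> carrier_vec n"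
    and comb: "\<And>j. j < n \<Longrightarrow> y $ j = (\<Sum>x\<in>F. c x * x $ j)" and j: "j < n"
  have "(f y + g y) $ j = (\<Sum>x\<in>F. c x * f x $ j) + (\<Sum>x\<in>F. c x * g x $ j)"
    using affine_comb_mapD(2)[OF f F y comb j] affine_comb_mapD(2)[OF g F y comb j]
      affine_comb_mapD(1)[OF g y] j by simp
  also have "\<dots> = (\<Sum>x\<in>F. c x * (f x + g x) $ j)"
    unfolding sum.distrib[symmetric]
  proof (rule sum.cong[OF refl])
    fix x assume "x \<in> F"
    then have "f x \<in> carrier_vec n" "g x \<in> carrier_vec n"
      using F(2) affine_comb_mapD(1)[OF f] affine_comb_mapD(1)[OF g] by auto
    then show "c x * f x $ j + c x * g x $ j = c x * (f x + g x) $ j" using j by (simp add: distrib_left)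
  qed
  finally show "(f y + g y) $ j = (\<Sum>x\<in>F. c x * (f x + g x) $ j)" .
qed (use affine_comb_mapD(1)[OF f] affine_comb_mapD(1)[OF g] in auto)

lemma affine_comb_map_diff:
  assumes f: "affine_comb_map n f" and g: "affine_comb_map n g"
  shows "affine_comb_map n (\<lambda>y. f y - g y)"
proof (rule affine_comb_mapI)
  fix F c and y :: "real vec" and j assume F: "finite F" "F \<subseteq> carrier_vec n" "sum c F = 1" and y: "y \<in> carrier_vec n"
    and comb: "\<And>j. j < n \<Longrightarrow> y $ j = (\<Sum>x\<in>F. c x * x $ j)" and j: "j < n"
  have "(f y - g y) $ j = (\<Sum>x\<in>F. c x * f x $ j) - (\<Sum>x\<in>F. c x * g x $ j)"
    using affine_comb_mapD(2)[OF f F y comb j] affine_comb_mapD(2)[OF g F y comb j]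
      affine_comb_mapD(1)[OF g y] j by simp
  also have "\<dots> = (\<Sum>x\<in>F. c x * (f x - g x) $ j)"
    unfolding sum_subtractf[symmetric]
  proof (rule sum.cong[OF refl])
    fix x assume "x \<in> F"
    then have "f x \<in> carrier_vec n" "g x \<in> carrier_vec n"
      using F(2) affine_comb_mapD(1)[OF f] affine_comb_mapD(1)[OF g] by auto
    then show "c x * f x $ j - c x * g x $ j = c x * (f x - g x) $ j" using j by (simp add: right_diff_distrib)
  qed
  finally show "(f y - g y) $ j = (\<Sum>x\<in>F. c x * (f x - g x) $ j)" .
qed (use affine_comb_mapD(1)[OF f] affine_comb_mapD(1)[OF g] in auto)

lemma affine_comb_map_mult:
  assumes M: "M \<in> carrier_mat n n" and f: "affine_comb_map n f"
  shows "affine_comb_map n (\<lambda>y. M *\<^sub>v f y)"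
proof (rule affine_comb_mapI)
  fix F c and y :: "real vec" and j assume F: "finite F" "F \<subseteq> carrier_vec n" "sum c F = 1" and y: "y \<in> carrier_vec n"
    and comb: "\<And>j. j < n \<Longrightarrow> y $ j = (\<Sum>x\<in>F. c x * x $ j)" and j: "j < n"
  show "(M *\<^sub>v f y) $ j = (\<Sum>x\<in>F. c x * (M *\<^sub>v f x) $ j)"
    using mult_mat_vec_lincomb[OF M F(1), of f "f y" c j] affine_comb_mapD(1)[OF f] F(2)
      affine_comb_mapD(1)[OF f y] affine_comb_mapD(2)[OF f F y comb] j
    by (auto simp: subset_iff)
qed (use M affine_comb_mapD(1)[OF f] in auto)

lemma affine_comb_map_eact: "k \<in> eucl n \<Longrightarrow> affine_comb_map n (eact k)"
  unfolding eact_def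
  by (intro affine_comb_map_add affine_comb_map_mult affine_comb_map_id affine_comb_map_const
      eucl_fst_carrier eucl_snd_carrier)

lemma affine_comb_map_eq:
  assumes f: "affine_comb_map n f" and g: "affine_comb_map n g"
    and F: "finite F" "F \<subseteq> carrier_vec n" "sum c F = 1"
    and y: "y \<in> carrier_vec n" "\<And>j. j < n \<Longrightarrow> y $ j = (\<Sum>x\<in>F. c x * x $ j)"
    and eq: "\<And>x. x \<in> F \<Longrightarrow> f x = g x"
  shows "f y = g y"
proof (rule eq_vecI)
  fix j assume "j < dim_vec (g y)"
  then have j: "j < n" using affine_comb_mapD(1)[OF g y(1)] by simp
  show "f y $ j = g y $ j"
    using affine_comb_mapD(2)[OF f F y j] affine_comb_mapD(2)[OF g F y j] eq by simp
qed (use affine_comb_mapD(1)[OF f y(1)] affine_comb_mapD(1)[OF g y(1)] in simp)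

lemma dim_count_identity:
  fixes x y z n :: nat
  assumes "x + y = z"
  shows "n + x * y + y * (y - 1) div 2 = n + y * (x + z - 1) div 2"
proof (cases y)
  case (Suc k)
  then have "x + z - 1 = 2 * x + k" using assms by simp
  then have "y * (x + z - 1) = 2 * (x * y) + y * (y - 1)" using Suc by (simp add: algebra_simps)
  then show ?thesis by simp
qed simp

locale seminorm_setting =
  fixes d1 d2 d daff m0 :: nat
    and S G T :: "euc set"
    and C :: "nat \<Rightarrow> euc set"
    and x0 :: "real vec"
    and R Rgen Raff :: "euc set"
  assumes d_def: "d = d1 + d2"
    and S_subgroup: "esubgroup d2 S"
    and S_lattice: "\<exists>ts. set ts \<subseteq> transl_sub d2 S \<and> length ts = d2 \<and> lin_indep_vecs d2 (map snd ts)"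
    and G_subgroup: "esubgroup d G"
    and G_sub: "G \<subseteq> {dsum d1 d2 A s | A s. A \<in> orth_group d1 \<and> s \<in> S}"
    and T_sub: "T \<subseteq> G"
    and T_bij: "bij_betw (eproj d1 d2) T (transl_sub d2 S)"
    and m0_pos: "m0 \<ge> 1"
    and TN_normal: "\<And>N. N \<in> periods m0 \<Longrightarrow> enormal d (TNpow d T N) G"
    and C_reps: "\<forall>N\<in>periods m0. C N \<subseteq> G \<and> finite (C N) \<and>
                   (\<forall>g\<in>G. \<exists>!c. c \<in> C N \<and> (\<exists>t\<in>TNpow d T N. g = emult c t))"
    and x0_carrier: "x0 \<in> carrier_vec d"
    and x0_inj: "inj_on (\<lambda>g. eact g x0) G"
    and daff_def: "daff = affdim d ((\<lambda>g. eact g x0) ` G)"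
    and orbit_head_zero: "\<And>g i. g \<in> G \<Longrightarrow> i < d - daff \<Longrightarrow> eact g x0 $ i = 0"
    and rot_finite: "finite (rot ` G)"
    and R_sub: "R \<subseteq> G" and R_finite: "finite R"
    and Rgen_sub: "Rgen \<subseteq> G" and eid_Rgen: "eid d \<in> Rgen" and Rgen_generates: "egen d Rgen = G"
    and Raff_property1: "property1 d x0 G Raff"
    and Rgen_Raff_R: "\<And>g h. g \<in> Rgen \<Longrightarrow> h \<in> Raff \<Longrightarrow> emult g h \<in> R"
begin

abbreviation offset :: "euc \<Rightarrow> real vec" where
  "offset g \<equiv> eact g x0 - x0"

abbreviation "d3 \<equiv> d - daff"
abbreviation "d4 \<equiv> daff - d2"

lemma G_eucl: "g \<in> G \<Longrightarrow> g \<in> eucl d" using esubgroup_eucl[OF G_subgroup] .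
lemma G_eid: "eid d \<in> G" using esubgroup_eid[OF G_subgroup] .
lemma G_emult: "g \<in> G \<Longrightarrow> h \<in> G \<Longrightarrow> emult g h \<in> G" using esubgroup_emult[OF G_subgroup] .
lemma G_einv: "g \<in> G \<Longrightarrow> einv g \<in> G" using esubgroup_einv[OF G_subgroup] .
lemma G_epow: "g \<in> G \<Longrightarrow> epow d g k \<in> G" using esubgroup_epow[OF G_subgroup] .
lemma G_rot_carrier: "g \<in> G \<Longrightarrow> rot g \<in> carrier_mat d d"
  using G_eucl eucl_rot orth_group_carrier by blast
lemma G_assoc: "g \<in> G \<Longrightarrow> h \<in> G \<Longrightarrow> k \<in> G \<Longrightarrow> emult (emult g h) k = emult g (emult h k)"
  using emult_assoc G_eucl by blast
lemma G_eid_left: "g \<in> G \<Longrightarrow> emult (eid d) g = g" using emult_eid_left G_eucl by blast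
lemma G_eid_right: "g \<in> G \<Longrightarrow> emult g (eid d) = g" using emult_eid_right G_eucl by blast
lemma G_einv_left: "g \<in> G \<Longrightarrow> emult (einv g) g = eid d" using emult_einv_left G_eucl by blast
lemma G_einv_right: "g \<in> G \<Longrightarrow> emult g (einv g) = eid d" using emult_einv_right G_eucl by blast
lemma G_einv_einv: "g \<in> G \<Longrightarrow> einv (einv g) = g" using einv_einv G_eucl by blast
lemma G_emult_einv_cancel: "g \<in> G \<Longrightarrow> h \<in> G \<Longrightarrow> emult g (emult (einv g) h) = h"
  using G_assoc[of g "einv g" h] G_einv G_einv_right G_eid_left by simp
lemma G_eact_emult: "g \<in> G \<Longrightarrow> h \<in> G \<Longrightarrow> x \<in> carrier_vec d \<Longrightarrow> eact (emult g h) x = eact g (eact h x)"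
  using eact_emult G_eucl by blast

lemma orbit_carrier: "g \<in> G \<Longrightarrow> eact g x0 \<in> carrier_vec d"
  using eact_carrier G_eucl x0_carrier by blast
lemma offset_carrier: "g \<in> G \<Longrightarrow> offset g \<in> carrier_vec d"
  using orbit_carrier x0_carrier by simp
lemma eact_eid_x0: "eact (eid d) x0 = x0"
  using eact_eid x0_carrier by blast
lemma offset_eid: "offset (eid d) = 0\<^sub>v d"
  using x0_carrier by (intro eq_vecI) (auto simp: eact_eid_x0)
lemma offset_head_zero: "g \<in> G \<Longrightarrow> l < d3 \<Longrightarrow> offset g $ l = 0"
  using orbit_head_zero[of g l] orbit_head_zero[OF G_eid, of l] orbit_carrier x0_carrier
  by (simp add: eact_eid_x0)

lemma offset_emult: 
  assumes g: "g \<in> G" and h: "h \<in> G"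
  shows "offset (emult g h) = offset g + rot g *\<^sub>v offset h"
proof -
  have "rot g *\<^sub>v offset h = rot g *\<^sub>v eact h x0 - rot g *\<^sub>v x0"
    using G_rot_carrier[OF g] orbit_carrier[OF h] x0_carrier by (simp add: mult_minus_distrib_mat_vec)
  then show ?thesis
    using G_eact_emult[OF g h x0_carrier] G_rot_carrier[OF g] orbit_carrier[OF h] x0_carrier
      eucl_snd_carrier[OF G_eucl[OF g]]
    by (intro eq_vecI) (auto simp: eact_def rot_def)
qed

lemma G_dsum_form:
  assumes "g \<in> G"
  obtains A B b where "g = dsum d1 d2 A (B, b)" "(B, b) \<in> S"
    "A \<in> carrier_mat d1 d1" "B \<in> carrier_mat d2 d2" "b \<in> carrier_vec d2"
proof -
  obtain A s where "g = dsum d1 d2 A s" "A \<in> orth_group d1" "s \<in> S" using G_sub assms by blast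
  moreover have "fst s \<in> carrier_mat d2 d2" "snd s \<in> carrier_vec d2"
    using esubgroup_eucl[OF S_subgroup \<open>s \<in> S\<close>] eucl_fst_carrier eucl_snd_carrier by auto
  ultimately show ?thesis using that orth_group_carrier by (metis prod.collapse)
qed

lemma T_dsum_form:
  assumes "t \<in> T"
  obtains A b where "t = dsum d1 d2 A (1\<^sub>m d2, b)" "A \<in> carrier_mat d1 d1" "b \<in> carrier_vec d2"
    "(1\<^sub>m d2, b) \<in> transl_sub d2 S"
proof -
  obtain A B b where g: "t = dsum d1 d2 A (B, b)" "A \<in> carrier_mat d1 d1" "B \<in> carrier_mat d2 d2"
    "b \<in> carrier_vec d2"
    using G_dsum_form T_sub assms by blast
  have "eproj d1 d2 t \<in> transl_sub d2 S" using T_bij assms by (auto simp: bij_betw_def)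
  moreover have "eproj d1 d2 t = (B, b)" using g eproj_dsum by simp
  ultimately have "B = 1\<^sub>m d2" "(B, b) \<in> transl_sub d2 S" by (auto simp: transl_sub_def rot_def)
  then show ?thesis using g that by blast
qed

lemma offset_dsum_transl_tail:
  assumes A: "A \<in> carrier_mat d1 d1" and b: "b \<in> carrier_vec d2" and j: "j < d2"
  shows "offset (dsum d1 d2 A (1\<^sub>m d2, b)) $ (d1 + j) = b $ j"
proof -
  have x0: "x0 = vec_first x0 d1 @\<^sub>v vec_last x0 d2" "vec_first x0 d1 \<in> carrier_vec d1"
    "vec_last x0 d2 \<in> carrier_vec d2"
    using x0_carrier d_def by (auto simp: vec_first_last_append)
  have "fst (dsum d1 d2 A (1\<^sub>m d2, b)) *\<^sub>v x0 = A *\<^sub>v vec_first x0 d1 @\<^sub>v vec_last x0 d2"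
    using dsum_mult_append[OF A one_carrier_mat x0(2,3)] x0(3) by (simp flip: x0(1))
  then show ?thesis
    using A b j x0_carrier d_def by (simp add: eact_def dsum_def vec_last_def)
qed

lemma translation_basis:
  obtains t :: "nat \<Rightarrow> euc" and b :: "nat \<Rightarrow> real vec"
  where "\<And>i. i < d2 \<Longrightarrow> t i \<in> T" "\<And>i. i < d2 \<Longrightarrow> b i \<in> carrier_vec d2"
    "\<And>i. i < d2 \<Longrightarrow> \<exists>A \<in> carrier_mat d1 d1. t i = dsum d1 d2 A (1\<^sub>m d2, b i)"
    "lin_indep_vecs d2 (map b [0..<d2])"
proof -
  obtain ts where ts: "set ts \<subseteq> transl_sub d2 S" "length ts = d2" "lin_indep_vecs d2 (map snd ts)"
    using S_lattice by blast
  have "\<exists>t\<in>T. eproj d1 d2 t = ts ! i" if "i < d2" for i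
  proof -
    have "ts ! i \<in> transl_sub d2 S" using ts that nth_mem by blast
    then show ?thesis using T_bij unfolding bij_betw_def by (metis imageE)
  qed
  then obtain t where t: "\<And>i. i < d2 \<Longrightarrow> t i \<in> T \<and> eproj d1 d2 (t i) = ts ! i" by metis
  have tb: "\<exists>A \<in> carrier_mat d1 d1. t i = dsum d1 d2 A (1\<^sub>m d2, snd (ts ! i))"
    "snd (ts ! i) \<in> carrier_vec d2" if i: "i < d2" for i
  proof -
    obtain A b where Ab: "t i = dsum d1 d2 A (1\<^sub>m d2, b)" "A \<in> carrier_mat d1 d1" "b \<in> carrier_vec d2"
      using T_dsum_form t[OF i] by metis
    have "ts ! i = (1\<^sub>m d2, b)" using t[OF i] Ab eproj_dsum[OF Ab(2) one_carrier_mat Ab(3)] by simp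
    then show "\<exists>A \<in> carrier_mat d1 d1. t i = dsum d1 d2 A (1\<^sub>m d2, snd (ts ! i))"
      "snd (ts ! i) \<in> carrier_vec d2" using Ab by auto
  qed
  have "map snd ts = map (\<lambda>i. snd (ts ! i)) [0..<d2]"
    using ts(2) by (simp add: list_eq_iff_nth_eq)
  then show ?thesis using that[of t "\<lambda>i. snd (ts ! i)"] t tb ts(3) by simp
qed

definition rot_exponent :: nat where
  "rot_exponent = fact (card (rot ` G))"

lemma rot_exponent_pos: "rot_exponent \<ge> 1"
  by (simp add: rot_exponent_def)

lemma rot_epow_period:
  assumes g: "g \<in> G"
  shows "\<exists>m. 1 \<le> m \<and> m \<le> card (rot ` G) \<and> rot (epow d g m) = 1\<^sub>m d"
proof -
  let ?f = "\<lambda>i. rot (epow d g i)"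
  have "?f ` {0..card (rot ` G)} \<subseteq> rot ` G" using G_epow[OF g] by auto
  from card_mono[OF rot_finite this]
  have "card (?f ` {0..card (rot ` G)}) < card {0..card (rot ` G)}" by simp
  then have "\<not> inj_on ?f {0..card (rot ` G)}" using pigeonhole by blast
  then obtain i j where "i \<le> card (rot ` G)" "j \<le> card (rot ` G)" "i \<noteq> j" "?f i = ?f j"
    unfolding inj_on_def by auto
  then obtain i j where ij: "i < j" "j \<le> card (rot ` G)" "?f i = ?f j"
    by (metis linorder_neqE_nat)
  have split: "?f j = ?f (j - i) * ?f i"
    using epow_add[OF G_subgroup g, of "j - i" i] ij(1) by (simp add: rot_emult)
  have c: "?f (j - i) \<in> carrier_mat d d" "?f i \<in> carrier_mat d d" using G_rot_carrier G_epow g by auto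
  have o: "?f i * (?f i)\<^sup>T = 1\<^sub>m d"
    using orth_group_mult_transpose eucl_rot G_eucl G_epow[OF g] by blast
  have "?f (j - i) = (?f (j - i) * ?f i) * (?f i)\<^sup>T"
    using c o by (simp add: assoc_mult_mat[of _ d d _ d _ d])
  also have "\<dots> = 1\<^sub>m d" using split ij(3) o by simp
  finally show ?thesis using ij by (intro exI[of _ "j - i"]) auto
qed

lemma rot_epow_rot_exponent_dvd:
  assumes g: "g \<in> G" and dvd: "rot_exponent dvd N"
  shows "rot (epow d g N) = 1\<^sub>m d"
proof -
  obtain m where m: "1 \<le> m" "m \<le> card (rot ` G)" "rot (epow d g m) = 1\<^sub>m d"
    using rot_epow_period[OF g] by blast
  have "m dvd rot_exponent" unfolding rot_exponent_def using m by (simp add: dvd_fact)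
  then obtain q where "N = m * q" using dvd by (metis dvd_trans dvdE)
  then show ?thesis using epow_mult[OF G_subgroup g] rot_epow_eq_one[OF m(3)] by simp
qed

lemma TNpow_sub: "N \<in> periods m0 \<Longrightarrow> TNpow d T N \<subseteq> G"
  using TN_normal by (simp add: enormal_def)

lemma TNpow_conj:
  "N \<in> periods m0 \<Longrightarrow> g \<in> G \<Longrightarrow> t \<in> TNpow d T N \<Longrightarrow> emult (emult g t) (einv g) \<in> TNpow d T N"
  using TN_normal by (simp add: enormal_def)

text \<open>Normality of T^N lets a period be moved past h: (c t) h = (c h) (h\<inverse> t h).\<close>

lemma periodic_shift:
  assumes N: "N \<in> periods m0" and per: "periodic G (TNpow d T N) u"
    and c: "c \<in> G" and t: "t \<in> TNpow d T N" and h: "h \<in> G"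
  shows "u (emult (emult c t) h) = u (emult c h)"
proof -
  have tG: "t \<in> G" using TNpow_sub[OF N] t by blast
  have hi: "einv h \<in> G" using G_einv[OF h] .
  define t' where "t' = emult (emult (einv h) t) h"
  have "t' \<in> TNpow d T N"
    using TNpow_conj[OF N hi t] G_einv_einv[OF h] by (simp add: t'_def)
  moreover have "emult (emult c h) t' = emult (emult c t) h"
    using G_assoc G_emult G_emult_einv_cancel c h hi tG by (simp add: t'_def)
  ultimately show ?thesis using per G_emult[OF c h] unfolding periodic_def by metis
qed

lemma periodic_epow:
  assumes N: "N \<in> periods m0" and per: "periodic G (TNpow d T N) u"
    and s: "s \<in> TNpow d T N" and g: "g \<in> G"
  shows "u (emult g (epow d s k)) = u g"
  using g
proof (induction k arbitrary: g)
  case 0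
  then show ?case using G_eid_right by simp
next
  case (Suc k)
  have sG: "s \<in> G" using TNpow_sub[OF N] s by blast
  have "u (emult g (epow d s (Suc k))) = u (emult (emult g s) (epow d s k))"
    using G_assoc[OF Suc.prems sG G_epow[OF sG]] by simp
  also have "\<dots> = u (emult g s)" using Suc.IH G_emult[OF Suc.prems sG] by blast
  also have "\<dots> = u g" using per Suc.prems s unfolding periodic_def by blast
  finally show ?case .
qed

section \<open>The affine dimension of the orbit\<close>

definition orbit_indep :: "nat \<Rightarrow> bool" where
  "orbit_indep k \<longleftrightarrow> (\<exists>p\<in>(\<lambda>g. eact g x0) ` G. \<exists>qs. set qs \<subseteq> (\<lambda>g. eact g x0) ` G \<and> length qs = k \<and>
                    lin_indep_vecs d (map (\<lambda>q. q - p) qs))"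

lemma daff_Greatest: "daff = Greatest orbit_indep"
  unfolding daff_def affdim_def orbit_indep_def by simp

lemma orbit_indep_le: "orbit_indep k \<Longrightarrow> k \<le> d"
  unfolding orbit_indep_def using lin_indep_vecs_length_le by fastforce

lemma orbit_indep_d2: "orbit_indep d2"
proof -
  obtain t b where tT: "\<And>i. i < d2 \<Longrightarrow> t i \<in> T" and bc: "\<And>i. i < d2 \<Longrightarrow> b i \<in> carrier_vec d2"
    and tb: "\<And>i. i < d2 \<Longrightarrow> \<exists>A \<in> carrier_mat d1 d1. t i = dsum d1 d2 A (1\<^sub>m d2, b i)"
    and indep: "lin_indep_vecs d2 (map b [0..<d2])"
    by (rule translation_basis) blast
  have tail: "offset (t i) $ (d1 + j) = b i $ j" if i: "i < d2" and j: "j < d2" for i j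
  proof -
    obtain A where "A \<in> carrier_mat d1 d1" "t i = dsum d1 d2 A (1\<^sub>m d2, b i)" using tb[OF i] ..
    then show ?thesis using offset_dsum_transl_tail bc[OF i] j by simp
  qed
  define qs where "qs = map (\<lambda>i. eact (t i) x0) [0..<d2]"
  have "lin_indep_vecs d (map (\<lambda>q. q - x0) qs)"
    unfolding lin_indep_vecs_def
  proof (intro allI impI)
    fix c :: "nat \<Rightarrow> real" and i
    assume h: "\<forall>j<d. (\<Sum>i<length (map (\<lambda>q. q - x0) qs). c i * map (\<lambda>q. q - x0) qs ! i $ j) = 0"
      and i: "i < length (map (\<lambda>q. q - x0) qs)"
    have "(\<Sum>i<d2. c i * b i $ j) = 0" if "j < d2" for j
    proof -
      have "(\<Sum>i<d2. c i * b i $ j) = (\<Sum>i<d2. c i * offset (t i) $ (d1 + j))"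
        using tail that by simp
      also have "\<dots> = 0" using h that d_def by (simp add: qs_def)
      finally show ?thesis .
    qed
    then show "c i = 0" using indep i unfolding lin_indep_vecs_def by (simp add: qs_def)
  qed
  moreover have "set qs \<subseteq> (\<lambda>g. eact g x0) ` G" using tT T_sub by (auto simp: qs_def intro!: rev_image_eqI)
  moreover have "x0 \<in> (\<lambda>g. eact g x0) ` G" using eact_eid_x0 G_eid by force
  moreover have "length qs = d2" by (simp add: qs_def)
  ultimately show ?thesis unfolding orbit_indep_def by (intro bexI[of _ x0] exI[of _ qs]) auto
qed

lemma daff_bounds: "orbit_indep daff" "d2 \<le> daff" "daff \<le> d"
  using GreatestI_nat[of orbit_indep d2 d] Greatest_le_nat[of orbit_indep d2 d]
    orbit_indep_d2 orbit_indep_le daff_Greatest by auto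

lemma d3_add_d4: "d3 + d4 = d1"
  using daff_bounds d_def by simp


lemma Raff_sub_G: "Raff \<subseteq> G" and eid_Raff: "eid d \<in> Raff"
  and Raff_affhull: "affhull d ((\<lambda>g. eact g x0) ` Raff) = affhull d ((\<lambda>g. eact g x0) ` G)"
  using Raff_property1 by (auto simp: property1_def)

lemma Raff_sub_R: "h \<in> Raff \<Longrightarrow> h \<in> R"
  using Rgen_Raff_R[OF eid_Rgen, of h] G_eid_left[of h] Raff_sub_G by auto

lemma eid_R: "eid d \<in> R"
  using Raff_sub_R eid_Raff by blast

lemma R_elem_G: "h \<in> R \<Longrightarrow> h \<in> G"
  using R_sub by blast

lemma orbit_affine_comb_Raff:
  assumes g: "g \<in> G"
  obtains F c where "finite F" "F \<subseteq> (\<lambda>h. eact h x0) ` Raff" "sum c F = 1"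
    "\<And>j. j < d \<Longrightarrow> eact g x0 $ j = (\<Sum>x\<in>F. c x * x $ j)"
proof -
  have "eact g x0 \<in> affhull d ((\<lambda>g. eact g x0) ` G)"
    unfolding affhull_def using g orbit_carrier[OF g]
    by (intro CollectI conjI exI[of _ "{eact g x0}"] exI[of _ "\<lambda>_. 1"]) auto
  then have "eact g x0 \<in> affhull d ((\<lambda>g. eact g x0) ` Raff)" by (simp add: Raff_affhull)
  then obtain F c where "finite F" "F \<subseteq> (\<lambda>h. eact h x0) ` Raff" "sum c F = 1"
    "\<forall>j<d. eact g x0 $ j = (\<Sum>x\<in>F. c x * x $ j)"
    unfolding affhull_def mem_Collect_eq by (elim conjE exE) (rule that)
  then show ?thesis by (intro that) auto
qed

definition in_offset_span :: "real vec \<Rightarrow> bool" where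
  "in_offset_span y \<longleftrightarrow> (\<exists>\<beta>. \<forall>j<d. y $ j = (\<Sum>h\<in>R. \<beta> h * offset h $ j))"

lemma in_offset_span_lincomb:
  assumes I: "finite I" and v: "\<And>i. i \<in> I \<Longrightarrow> in_offset_span (v i)"
    and y: "\<And>j. j < d \<Longrightarrow> y $ j = (\<Sum>i\<in>I. c i * v i $ j)"
  shows "in_offset_span y"
proof -
  have "\<forall>i\<in>I. \<exists>\<beta>. \<forall>j<d. v i $ j = (\<Sum>h\<in>R. \<beta> h * offset h $ j)"
    using v unfolding in_offset_span_def by blast
  from bchoice[OF this] obtain B
    where B: "\<forall>i\<in>I. \<forall>j<d. v i $ j = (\<Sum>h\<in>R. B i h * offset h $ j)" ..
  have "y $ j = (\<Sum>h\<in>R. (\<Sum>i\<in>I. c i * B i h) * offset h $ j)" if j: "j < d" for j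
  proof -
    have "y $ j = (\<Sum>i\<in>I. c i * (\<Sum>h\<in>R. B i h * offset h $ j))"
      unfolding y[OF j] using B j by (intro sum.cong refl) simp
    also have "\<dots> = (\<Sum>i\<in>I. \<Sum>h\<in>R. c i * B i h * offset h $ j)"
      by (simp add: sum_distrib_left mult.assoc)
    also have "\<dots> = (\<Sum>h\<in>R. (\<Sum>i\<in>I. c i * B i h) * offset h $ j)"
      by (subst sum.swap) (simp only: sum_distrib_right)
    finally show ?thesis .
  qed
  then show ?thesis unfolding in_offset_span_def by (intro exI[of _ "\<lambda>h. \<Sum>i\<in>I. c i * B i h"] allI impI)
qed

lemma in_offset_span_diff:
  assumes "in_offset_span a" "in_offset_span b" "\<And>j. j < d \<Longrightarrow> y $ j = a $ j - b $ j"
  shows "in_offset_span y"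
  using in_offset_span_lincomb[of "{0, 1::nat}" "\<lambda>i. if i = 0 then a else b" y "\<lambda>i. if i = 0 then 1 else -1"]
    assms by simp

lemma offset_in_offset_span:
  assumes g: "g \<in> G"
  shows "in_offset_span (offset g)"
proof -
  obtain F c where F: "finite F" "F \<subseteq> (\<lambda>h. eact h x0) ` Raff" "sum c F = 1"
    and comb: "\<And>j. j < d \<Longrightarrow> eact g x0 $ j = (\<Sum>x\<in>F. c x * x $ j)"
    by (rule orbit_affine_comb_Raff[OF g]) blast
  define H where "H = {h \<in> R. h \<in> Raff \<and> eact h x0 \<in> F}"
  have bij: "bij_betw (\<lambda>h. eact h x0) H F"
    unfolding bij_betw_def H_def using F(2) Raff_sub_R R_sub inj_on_subset[OF x0_inj]
    by (auto intro!: inj_on_subset[OF x0_inj])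
  have F_carrier: "x \<in> carrier_vec d" if "x \<in> F" for x
    using that F(2) Raff_sub_G orbit_carrier by blast
  let ?\<beta> = "\<lambda>h. if h \<in> Raff \<and> eact h x0 \<in> F then c (eact h x0) else 0"
  have "offset g $ j = (\<Sum>h\<in>R. ?\<beta> h * offset h $ j)" if j: "j < d" for j
  proof -
    have "(\<Sum>h\<in>R. ?\<beta> h * offset h $ j)
        = (\<Sum>h\<in>R. if h \<in> Raff \<and> eact h x0 \<in> F then c (eact h x0) * offset h $ j else 0)"
      by (intro sum.cong) auto
    also have "\<dots> = (\<Sum>h\<in>H. c (eact h x0) * offset h $ j)"
      unfolding H_def using R_finite by (simp add: sum.inter_filter)
    also have "\<dots> = (\<Sum>x\<in>F. c x * (x - x0) $ j)"
      using sum.reindex_bij_betw[OF bij, of "\<lambda>x. c x * (x - x0) $ j"] by simp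
    also have "\<dots> = (\<Sum>x\<in>F. c x * x $ j) - (\<Sum>x\<in>F. c x) * x0 $ j"
      using F_carrier j x0_carrier by (simp add: sum_distrib_right right_diff_distrib sum_subtractf)
    also have "\<dots> = offset g $ j" using comb[OF j] F(3) j x0_carrier orbit_carrier[OF g] by simp
    finally show ?thesis by simp
  qed
  then show ?thesis unfolding in_offset_span_def by (intro exI[of _ ?\<beta>]) simp
qed

text \<open>The differences of daff independent orbit points vanish on the first d3 coordinates, hence
  span that coordinate subspace; each of them is a difference of two offsets.\<close>

lemma in_offset_span_if_head_zero:
  assumes y: "\<And>j. j < d3 \<Longrightarrow> y $ j = 0"
  shows "in_offset_span y"
proof -
  obtain p qs where p: "p \<in> (\<lambda>g. eact g x0) ` G" and qs: "set qs \<subseteq> (\<lambda>g. eact g x0) ` G"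
    and len: "length qs = daff" and indep: "lin_indep_vecs d (map (\<lambda>q. q - p) qs)"
    using daff_bounds(1) unfolding orbit_indep_def by blast
  let ?vs = "map (\<lambda>q. q - p) qs"
  have diff: "\<exists>g g'. g \<in> G \<and> g' \<in> G \<and> v = offset g - offset g'" if v: "v \<in> set ?vs" for v
  proof -
    obtain q where q: "q \<in> set qs" "v = q - p" using v by auto
    obtain g where "g \<in> G" "q = eact g x0" using q(1) qs by blast
    moreover obtain g' where "g' \<in> G" "p = eact g' x0" using p by blast
    ultimately have "g \<in> G" "g' \<in> G" "v = eact g x0 - eact g' x0" using q(2) by auto
    moreover have "eact g x0 - eact g' x0 = offset g - offset g'"
      using orbit_carrier[OF \<open>g \<in> G\<close>] orbit_carrier[OF \<open>g' \<in> G\<close>] x0_carrier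
      by (intro eq_vecI) auto
    ultimately show ?thesis by blast
  qed
  have head: "v $ j = 0" if v: "v \<in> set ?vs" and j: "j < d3" for v j
  proof -
    obtain g g' where "g \<in> G" "g' \<in> G" "v = offset g - offset g'" using diff[OF v] by blast
    moreover have "j < d" using j by simp
    ultimately show ?thesis
      using j offset_head_zero[of g j] offset_head_zero[of g' j] carrier_vecD[OF offset_carrier[of g']]
      by simp
  qed
  obtain c where c: "\<forall>j. d3 \<le> j \<and> j < d \<longrightarrow> y $ j = (\<Sum>i<length ?vs. c i * ?vs ! i $ j)"
    using lin_indep_vecs_span_tail[OF indep _ head] len daff_bounds by fastforce
  have comb: "y $ j = (\<Sum>i\<in>{..<length ?vs}. c i * ?vs ! i $ j)" if j: "j < d" for j
  proof (cases "j < d3")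
    case True
    then show ?thesis using y head by (auto intro!: sum.neutral)
  qed (use c j in simp)
  have span: "in_offset_span (?vs ! i)" if i: "i \<in> {..<length ?vs}" for i
  proof -
    have "?vs ! i \<in> set ?vs" using i by simp
    then obtain g g' where gg: "g \<in> G" "g' \<in> G" "?vs ! i = offset g - offset g'"
      using diff by blast
    show ?thesis using offset_in_offset_span[OF gg(1)] offset_in_offset_span[OF gg(2)]
      by (rule in_offset_span_diff) (use gg carrier_vecD[OF offset_carrier[OF gg(2)]] in simp)
  qed
  show ?thesis by (rule in_offset_span_lincomb[OF finite_lessThan span comb])
qed

section \<open>U_iso(R) is closed\<close>

text \<open>Membership in U_iso(R) is a system of linear equations in the values of w: the offsets of R
  span the last daff coordinates, so a and the relevant columns of S are linear functions of w.\<close>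

definition unit_coeff :: "nat \<Rightarrow> euc \<Rightarrow> real" where
  "unit_coeff j = (SOME \<beta>. \<forall>l<d. unit_vec d j $ l = (\<Sum>h\<in>R. \<beta> h * offset h $ l))"

lemma unit_coeff:
  assumes "d3 \<le> j" "j < d" "l < d"
  shows "unit_vec d j $ l = (\<Sum>h\<in>R. unit_coeff j h * offset h $ l)"
proof -
  have "in_offset_span (unit_vec d j)" using assms by (intro in_offset_span_if_head_zero) auto
  then have "\<forall>l<d. unit_vec d j $ l = (\<Sum>h\<in>R. unit_coeff j h * offset h $ l)"
    unfolding in_offset_span_def unit_coeff_def by (rule someI_ex)
  then show ?thesis using assms(3) by blast
qed

definition rot_coord :: "(euc \<Rightarrow> real vec) \<Rightarrow> euc \<Rightarrow> nat \<Rightarrow> real" where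
  "rot_coord w h i = (\<Sum>l<d. rot h $$ (i, l) * w h $ l)"

definition skew_coeff :: "(euc \<Rightarrow> real vec) \<Rightarrow> nat \<Rightarrow> nat \<Rightarrow> real" where
  "skew_coeff w j i = (\<Sum>h\<in>R. unit_coeff j h * (rot_coord w h i - rot_coord w (eid d) i))"

definition iso_equations :: "(euc \<Rightarrow> real vec) \<Rightarrow> bool" where
  "iso_equations w \<longleftrightarrow>
     (\<forall>h\<in>R. \<forall>i<d. rot_coord w h i - rot_coord w (eid d) i = (\<Sum>l\<in>{d3..<d}. offset h $ l * skew_coeff w l i)) \<and>
     (\<forall>i\<in>{d3..<d}. \<forall>j\<in>{d3..<d}. skew_coeff w j i + skew_coeff w i j = 0)"

lemma rot_coord_eq: "w h \<in> carrier_vec d \<Longrightarrow> h \<in> G \<Longrightarrow> i < d \<Longrightarrow> rot_coord w h i = (rot h *\<^sub>v w h) $ i"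
  unfolding rot_coord_def using mult_mat_vec_index[OF G_rot_carrier] by simp

lemma sum_offset_tail:
  assumes "h \<in> G"
  shows "(\<Sum>l<d. f l * offset h $ l) = (\<Sum>l\<in>{d3..<d}. f l * offset h $ l)"
proof -
  let ?g = "\<lambda>l. f l * offset h $ l"
  have "{..<d} = {..<d3} \<union> {d3..<d}" by auto
  moreover have "sum ?g ({..<d3} \<union> {d3..<d}) = sum ?g {..<d3} + sum ?g {d3..<d}"
    by (rule sum.union_disjoint) auto
  ultimately have "sum ?g {..<d} = sum ?g {..<d3} + sum ?g {d3..<d}" by simp
  moreover have "sum ?g {..<d3} = 0" using offset_head_zero[OF assms] by simp
  ultimately show ?thesis by simp
qed

lemma mult_offset_eq_tail:
  assumes M: "M \<in> carrier_mat d d" and h: "h \<in> G" and i: "i < d"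
  shows "(M *\<^sub>v offset h) $ i = (\<Sum>l\<in>{d3..<d}. M $$ (i, l) * offset h $ l)"
  using mult_mat_vec_index[OF M offset_carrier[OF h] i] sum_offset_tail[OF h] by simp

lemma U_iso_imp_iso_equations:
  assumes w: "w \<in> U_iso d x0 R"
  shows "iso_equations w"
proof -
  obtain a S where a: "a \<in> carrier_vec d" and S: "S \<in> skew d"
    and aS: "\<And>h. h \<in> R \<Longrightarrow> rot h *\<^sub>v w h = a + S *\<^sub>v offset h" and wc: "\<And>h. h \<in> R \<Longrightarrow> w h \<in> carrier_vec d"
    using w unfolding U_iso_def by blast
  have Sc: "S \<in> carrier_mat d d" using S by (rule skew_carrier)
  have diff: "rot_coord w h i - rot_coord w (eid d) i = (S *\<^sub>v offset h) $ i"
    if h: "h \<in> R" and i: "i < d" for h i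
    using rot_coord_eq[of w h i] rot_coord_eq[of w "eid d" i] wc[OF h] wc[OF eid_R] R_elem_G[OF h] G_eid
      aS[OF h] aS[OF eid_R] a Sc offset_carrier[OF R_elem_G[OF h]] i
    by (simp add: offset_eid)
  have coeff: "skew_coeff w j i = S $$ (i, j)" if j: "d3 \<le> j" "j < d" and i: "i < d" for i j
  proof -
    have "skew_coeff w j i = (\<Sum>h\<in>R. unit_coeff j h * (S *\<^sub>v offset h) $ i)"
      unfolding skew_coeff_def using diff i by simp
    also have "\<dots> = (S *\<^sub>v unit_vec d j) $ i"
      using mult_mat_vec_lincomb[OF Sc R_finite _ unit_vec_carrier unit_coeff[OF j] i] offset_carrier R_elem_G
      by simp
    also have "\<dots> = S $$ (i, j)" using mult_mat_vec_unit_vec_index[OF Sc i j(2)] .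
    finally show ?thesis .
  qed
  have eq1: "rot_coord w h i - rot_coord w (eid d) i = (\<Sum>l\<in>{d3..<d}. offset h $ l * skew_coeff w l i)"
    if "h \<in> R" "i < d" for h i
    using diff[OF that] mult_offset_eq_tail[OF Sc R_elem_G that(2)] that coeff by (simp add: mult.commute)
  have eq2: "skew_coeff w j i + skew_coeff w i j = 0" if "i \<in> {d3..<d}" "j \<in> {d3..<d}" for i j
    using coeff that skew_index[OF S, of i j] by simp
  show ?thesis unfolding iso_equations_def by (intro conjI ballI allI impI eq1 eq2)
qed

lemma iso_equations_imp_U_iso:
  assumes we: "w \<in> extensional R" and wc: "\<And>h. h \<in> R \<Longrightarrow> w h \<in> carrier_vec d"
    and eqs: "iso_equations w"
  shows "w \<in> U_iso d x0 R"
proof -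
  define a where "a = vec d (\<lambda>i. rot_coord w (eid d) i)"
  define S where "S = mat d d (\<lambda>(i, j). if d3 \<le> j then skew_coeff w j i else if d3 \<le> i then - skew_coeff w i j else 0)"
  have Sc: "S \<in> carrier_mat d d" by (simp add: S_def)
  have skew_eq: "skew_coeff w j i + skew_coeff w i j = 0" if "d3 \<le> i" "i < d" "d3 \<le> j" "j < d" for i j
    using eqs that unfolding iso_equations_def by simp
  have "S $$ (j, i) = - S $$ (i, j)" if "i < d" "j < d" for i j
    using that skew_eq[of i j] by (auto simp: S_def)
  then have S: "S \<in> skew d" using Sc unfolding skew_iff_index by (intro conjI allI impI)
  have eq: "rot h *\<^sub>v w h = a + S *\<^sub>v offset h" if h: "h \<in> R" for h
  proof (rule eq_vecI)
    fix i assume "i < dim_vec (a + S *\<^sub>v offset h)"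
    then have i: "i < d" using Sc by (simp add: a_def)
    have "(S *\<^sub>v offset h) $ i = (\<Sum>l\<in>{d3..<d}. offset h $ l * skew_coeff w l i)"
      using mult_offset_eq_tail[OF Sc R_elem_G[OF h] i] i by (simp add: S_def mult.commute)
    also have "\<dots> = rot_coord w h i - rot_coord w (eid d) i"
      using eqs h i unfolding iso_equations_def by simp
    finally show "(rot h *\<^sub>v w h) $ i = (a + S *\<^sub>v offset h) $ i"
      using rot_coord_eq[of w h i] wc[OF h] R_elem_G[OF h] i Sc by (simp add: a_def)
  qed (use G_rot_carrier[OF R_elem_G[OF h]] Sc in \<open>simp add: a_def\<close>)
  have ac: "a \<in> carrier_vec d" by (simp add: a_def)
  show ?thesis unfolding U_iso_def
    by (intro CollectI conjI ballI bexI[OF _ ac] bexI[OF _ S] we wc eq)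
qed

lemma U_iso_nonempty: "restrict (\<lambda>h. 0\<^sub>v d) R \<in> U_iso d x0 R"
proof -
  have "0\<^sub>m d d \<in> skew d" by (auto simp: skew_def)
  moreover have "rot h *\<^sub>v restrict (\<lambda>h. 0\<^sub>v d) R h = 0\<^sub>v d + 0\<^sub>m d d *\<^sub>v offset h" if "h \<in> R" for h
    using that G_rot_carrier[OF R_elem_G[OF that]] offset_carrier[OF R_elem_G[OF that]] by simp
  ultimately show ?thesis unfolding U_iso_def by (intro CollectI conjI bexI[of _ "0\<^sub>v d"]) auto
qed

lemma fdist_lipschitz_rot_coord: "h \<in> R \<Longrightarrow> i < d \<Longrightarrow> fdist_lipschitz d R (\<lambda>w. rot_coord w h i)"
  unfolding rot_coord_def
  by (intro fdist_lipschitz_sum fdist_lipschitz_scale fdist_lipschitz_coord R_finite) auto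

lemma fdist_lipschitz_skew_coeff: "i < d \<Longrightarrow> fdist_lipschitz d R (\<lambda>w. skew_coeff w j i)"
  unfolding skew_coeff_def
  by (intro fdist_lipschitz_sum fdist_lipschitz_scale fdist_lipschitz_diff fdist_lipschitz_rot_coord
      R_finite eid_R)

lemma U_iso_closed:
  assumes ve: "v \<in> extensional R" and vc: "\<And>h. h \<in> R \<Longrightarrow> v h \<in> carrier_vec d"
    and sd: "setdist R v (U_iso d x0 R) = 0"
  shows "v \<in> U_iso d x0 R"
proof -
  have zero: "F v = 0" if "fdist_lipschitz d R F" "\<And>w. w \<in> U_iso d x0 R \<Longrightarrow> F w = 0" for F
    using fdist_lipschitz_zero_if_setdist_zero[OF that _ _ vc sd] U_iso_nonempty
    unfolding U_iso_def by blast
  have eq1: "rot_coord v h i - rot_coord v (eid d) i = (\<Sum>l\<in>{d3..<d}. offset h $ l * skew_coeff v l i)"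
    if "h \<in> R" "i < d" for h i
    using zero[of "\<lambda>w. rot_coord w h i - rot_coord w (eid d) i - (\<Sum>l\<in>{d3..<d}. offset h $ l * skew_coeff w l i)"]
      U_iso_imp_iso_equations that
    by (simp add: iso_equations_def fdist_lipschitz_diff fdist_lipschitz_rot_coord eid_R
        fdist_lipschitz_sum fdist_lipschitz_scale fdist_lipschitz_skew_coeff)
  have eq2: "skew_coeff v j i + skew_coeff v i j = 0" if "i \<in> {d3..<d}" "j \<in> {d3..<d}" for i j
    using zero[of "\<lambda>w. skew_coeff w j i + skew_coeff w i j"] U_iso_imp_iso_equations that
    by (simp add: iso_equations_def fdist_lipschitz_add fdist_lipschitz_skew_coeff)
  have "iso_equations v" unfolding iso_equations_def by (intro conjI ballI allI impI eq1 eq2)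
  then show ?thesis by (intro iso_equations_imp_U_iso ve vc)
qed

section \<open>From local to global isometric displacements\<close>

lemma eact_diff_eq:
  assumes g: "g \<in> G" and y: "y \<in> carrier_vec d"
  shows "eact g y - eact g x0 = rot g *\<^sub>v (y - x0)"
  using G_rot_carrier[OF g] y x0_carrier eucl_snd_carrier[OF G_eucl[OF g]]
  by (simp add: mult_minus_distrib_mat_vec eact_def rot_def) (intro eq_vecI, auto)

text \<open>If u(g h) is isometric on h \<in> R with data a g, S g, then rot(g h) u(g h) is the value at
  g h x0 of the affine map below; u is globally isometric once these maps agree on the orbit.\<close>

definition local_motion :: "(euc \<Rightarrow> real vec) \<Rightarrow> (euc \<Rightarrow> real mat) \<Rightarrow> euc \<Rightarrow> real vec \<Rightarrow> real vec" where
  "local_motion a W g y = rot g *\<^sub>v (a g + W g *\<^sub>v ((rot g)\<^sup>T *\<^sub>v (y - eact g x0)))"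

definition local_iso_data :: "(euc \<Rightarrow> real vec) \<Rightarrow> (euc \<Rightarrow> real mat) \<Rightarrow> (euc \<Rightarrow> real vec) \<Rightarrow> bool" where
  "local_iso_data a W u \<longleftrightarrow> (\<forall>g\<in>G. a g \<in> carrier_vec d \<and> W g \<in> skew d \<and>
     (\<forall>h\<in>R. rot h *\<^sub>v u (emult g h) = a g + W g *\<^sub>v offset h))"

lemma local_motion_at_emult:
  assumes H: "local_iso_data a W u" and u: "\<And>g. g \<in> G \<Longrightarrow> u g \<in> carrier_vec d"
    and g: "g \<in> G" and h: "h \<in> R"
  shows "rot (emult g h) *\<^sub>v u (emult g h) = local_motion a W g (eact (emult g h) x0)"
proof -
  have hG: "h \<in> G" using h R_sub by blast
  have "offset h = (rot g)\<^sup>T *\<^sub>v (eact (emult g h) x0 - eact g x0)"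
    using eact_diff_eq[OF g orbit_carrier[OF hG]] G_eact_emult[OF g hG x0_carrier]
      transpose_rot_mult_rot_vec[OF G_eucl[OF g] offset_carrier[OF hG]] by simp
  moreover have "rot (emult g h) *\<^sub>v u (emult g h) = rot g *\<^sub>v (rot h *\<^sub>v u (emult g h))"
    using G_rot_carrier[OF g] G_rot_carrier[OF hG] u[OF G_emult[OF g hG]] by (simp add: rot_emult)
  ultimately show ?thesis using H g h unfolding local_iso_data_def local_motion_def by simp
qed

lemma affine_comb_map_local_motion:
  assumes H: "local_iso_data a W u" and g: "g \<in> G" and k: "k \<in> G"
  shows "affine_comb_map d (\<lambda>y. local_motion a W g (eact k y))"
proof -
  have "a g \<in> carrier_vec d" "W g \<in> carrier_mat d d" "(rot g)\<^sup>T \<in> carrier_mat d d"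
    using H g G_rot_carrier[OF g] unfolding local_iso_data_def by (auto simp: skew_def)
  then show ?thesis unfolding local_motion_def
    by (intro affine_comb_map_mult affine_comb_map_add affine_comb_map_const affine_comb_map_diff
        affine_comb_map_eact G_eucl k G_rot_carrier g transpose_carrier_mat orbit_carrier)
qed

text \<open>Both maps send g r h x0 (h \<in> Raff) to rot(g r h) u(g r h), since r h \<in> R, and the
  points r h x0 affinely span the orbit.\<close>

lemma local_motion_emult_Rgen:
  assumes H: "local_iso_data a W u" and u: "\<And>g. g \<in> G \<Longrightarrow> u g \<in> carrier_vec d"
    and g: "g \<in> G" and r: "r \<in> Rgen" and k: "k \<in> G"
  shows "local_motion a W (emult g r) (eact k x0) = local_motion a W g (eact k x0)"
proof -
  have rG: "r \<in> G" using r Rgen_sub by blast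
  define gr where "gr = emult g r"
  have grG: "gr \<in> G" using G_emult[OF g rG] by (simp add: gr_def)
  define k' where "k' = emult (einv gr) k"
  have k'G: "k' \<in> G" using G_emult[OF G_einv[OF grG] k] by (simp add: k'_def)
  have k_eq: "eact k x0 = eact gr (eact k' x0)"
    using G_eact_emult[OF grG k'G x0_carrier] G_emult_einv_cancel[OF grG k] by (simp add: k'_def)
  obtain F c where F: "finite F" "F \<subseteq> (\<lambda>h. eact h x0) ` Raff" "sum c F = 1"
    and comb: "\<And>j. j < d \<Longrightarrow> eact k' x0 $ j = (\<Sum>x\<in>F. c x * x $ j)"
    by (rule orbit_affine_comb_Raff[OF k'G]) blast
  have Fc: "F \<subseteq> carrier_vec d" using F(2) Raff_sub_G orbit_carrier by blast
  have "local_motion a W gr (eact gr x) = local_motion a W g (eact gr x)" if x: "x \<in> F" for x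
  proof -
    obtain h where h: "h \<in> Raff" "x = eact h x0" using x F(2) by blast
    have hG: "h \<in> G" using h Raff_sub_G by blast
    have "eact gr x = eact (emult gr h) x0" using h G_eact_emult[OF grG hG x0_carrier] by simp
    moreover have "emult gr h = emult g (emult r h)" unfolding gr_def using G_assoc[OF g rG hG] .
    ultimately show ?thesis
      using local_motion_at_emult[OF H u g Rgen_Raff_R[OF r h(1)]]
        local_motion_at_emult[OF H u grG Raff_sub_R[OF h(1)]] by simp
  qed
  then have "local_motion a W gr (eact gr (eact k' x0)) = local_motion a W g (eact gr (eact k' x0))"
    by (intro affine_comb_map_eq[OF affine_comb_map_local_motion[OF H grG grG]
          affine_comb_map_local_motion[OF H g grG] F(1) Fc F(3) orbit_carrier[OF k'G] comb])
  then show ?thesis using k_eq by (simp add: gr_def)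
qed

lemma local_motion_eq_eid:
  assumes H: "local_iso_data a W u" and u: "\<And>g. g \<in> G \<Longrightarrow> u g \<in> carrier_vec d"
    and g: "g \<in> G" and k: "k \<in> G"
  shows "local_motion a W g (eact k x0) = local_motion a W (eid d) (eact k x0)"
proof -
  define same where "same g g' \<longleftrightarrow> (\<forall>k\<in>G. local_motion a W g (eact k x0) = local_motion a W g' (eact k x0))"
    for g g'
  have "x \<in> G \<and> (\<forall>g\<in>G. same (emult g x) g)" if "x \<in> egen d Rgen" for x
    using that
  proof (induction rule: egen.induct)
    case egen_id
    then show ?case using G_eid G_eid_right by (simp add: same_def)
  next
    case (egen_base r)
    then show ?case using Rgen_sub local_motion_emult_Rgen[OF H u] by (auto simp: same_def)
  next
    case (egen_mult x y)
    have "same (emult g (emult x y)) g" if g: "g \<in> G" for g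
    proof -
      have "same (emult (emult g x) y) (emult g x)" "same (emult g x) g"
        using egen_mult.IH g G_emult by auto
      then show ?thesis using G_assoc[OF g] egen_mult.IH by (simp add: same_def)
    qed
    then show ?case using egen_mult.IH G_emult by blast
  next
    case (egen_inv x)
    have "same (emult g (einv x)) g" if g: "g \<in> G" for g
    proof -
      have gx: "emult g (einv x) \<in> G" using g G_einv G_emult egen_inv.IH by blast
      have "same (emult (emult g (einv x)) x) (emult g (einv x))" using egen_inv.IH gx by blast
      moreover have "emult (emult g (einv x)) x = g"
        using G_assoc[OF g G_einv] G_einv_left G_eid_right g egen_inv.IH by simp
      ultimately show ?thesis by (simp add: same_def)
    qed
    then show ?case using egen_inv.IH G_einv by blast
  qed
  then have "same (emult (eid d) g) (eid d)" using g G_eid Rgen_generates by blast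
  then show ?thesis using G_eid_left[OF g] k by (simp add: same_def)
qed

lemma locally_iso_imp_iso:
  assumes u: "\<And>g. g \<in> G \<Longrightarrow> u g \<in> carrier_vec d"
    and loc: "\<And>g. g \<in> G \<Longrightarrow> restrict (\<lambda>h. u (emult g h)) R \<in> U_iso d x0 R"
  obtains a W where "a \<in> carrier_vec d" "W \<in> skew d" "\<And>g. g \<in> G \<Longrightarrow> rot g *\<^sub>v u g = a + W *\<^sub>v offset g"
proof -
  have "\<forall>g\<in>G. \<exists>aW. fst aW \<in> carrier_vec d \<and> snd aW \<in> skew d \<and>
     (\<forall>h\<in>R. rot h *\<^sub>v u (emult g h) = fst aW + snd aW *\<^sub>v offset h)"
  proof
    fix g assume "g \<in> G"
    then obtain a W where "a \<in> carrier_vec d" "W \<in> skew d"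
      "\<forall>h\<in>R. rot h *\<^sub>v restrict (\<lambda>h. u (emult g h)) R h = a + W *\<^sub>v offset h"
      using loc unfolding U_iso_def by blast
    then show "\<exists>aW. fst aW \<in> carrier_vec d \<and> snd aW \<in> skew d \<and>
        (\<forall>h\<in>R. rot h *\<^sub>v u (emult g h) = fst aW + snd aW *\<^sub>v offset h)"
      by (intro exI[of _ "(a, W)"]) auto
  qed
  from bchoice[OF this] obtain f where f: "\<forall>g\<in>G. fst (f g) \<in> carrier_vec d \<and> snd (f g) \<in> skew d \<and>
     (\<forall>h\<in>R. rot h *\<^sub>v u (emult g h) = fst (f g) + snd (f g) *\<^sub>v offset h)" ..
  define a where "a = (\<lambda>g. fst (f g))"
  define W where "W = (\<lambda>g. snd (f g))"
  have H: "local_iso_data a W u" unfolding local_iso_data_def a_def W_def using f by blast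
  have aW: "a (eid d) \<in> carrier_vec d" "W (eid d) \<in> skew d"
    using H G_eid unfolding local_iso_data_def by auto
  have "rot g *\<^sub>v u g = a (eid d) + W (eid d) *\<^sub>v offset g" if g: "g \<in> G" for g
  proof -
    have "rot g *\<^sub>v u g = local_motion a W g (eact g x0)"
      using local_motion_at_emult[OF H u g eid_R] G_eid_right[OF g] by simp
    also have "\<dots> = local_motion a W (eid d) (eact g x0)" using local_motion_eq_eid[OF H u g g] .
    also have "\<dots> = a (eid d) + W (eid d) *\<^sub>v offset g"
      using aW offset_carrier[OF g] skew_carrier[OF aW(2)]
      by (simp add: local_motion_def rot_eid eact_eid_x0)
    finally show ?thesis .
  qed
  with aW show ?thesis by (rule that)
qed

section \<open>The kernel of the seminorm\<close>

lemma kerR_locally_iso: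
  assumes u: "u \<in> kerR d G T m0 C x0 R"
  obtains N where "N \<in> periods m0" "periodic G (TNpow d T N) u"
    "\<And>g. g \<in> G \<Longrightarrow> restrict (\<lambda>h. u (emult g h)) R \<in> U_iso d x0 R"
proof -
  obtain N where N: "N \<in> periods m0" and per: "periodic G (TNpow d T N) u"
    and zero: "seminormR d x0 R (C N) u = 0"
    using u unfolding kerR_def by blast
  have uc: "\<And>g. g \<in> G \<Longrightarrow> u g \<in> carrier_vec d" using u unfolding kerR_def U_per_def by blast
  have C: "C N \<subseteq> G" "finite (C N)" "\<And>g. g \<in> G \<Longrightarrow> \<exists>c t. c \<in> C N \<and> t \<in> TNpow d T N \<and> g = emult c t"
    using C_reps N by blast+
  have "card (C N) > 0" using C G_eid card_gt_0_iff by blast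
  then have "(\<Sum>c\<in>C N. (setdist R (restrict (\<lambda>h. u (emult c h)) R) (U_iso d x0 R))\<^sup>2) = 0"
    using zero by (simp add: seminormR_def)
  then have "\<forall>c\<in>C N. (setdist R (restrict (\<lambda>h. u (emult c h)) R) (U_iso d x0 R))\<^sup>2 = 0"
    by (subst (asm) sum_nonneg_eq_0_iff[OF C(2)]) auto
  then have "setdist R (restrict (\<lambda>h. u (emult c h)) R) (U_iso d x0 R) = 0" if "c \<in> C N" for c
    using that by simp
  moreover have "u (emult c h) \<in> carrier_vec d" if "c \<in> C N" "h \<in> R" for c h
    using that C(1) R_sub by (intro uc G_emult) auto
  ultimately have C_iso: "restrict (\<lambda>h. u (emult c h)) R \<in> U_iso d x0 R" if c: "c \<in> C N" for c
    using c by (intro U_iso_closed) auto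
  have "restrict (\<lambda>h. u (emult g h)) R \<in> U_iso d x0 R" if g: "g \<in> G" for g
  proof -
    obtain c t where ct: "c \<in> C N" "t \<in> TNpow d T N" "g = emult c t" using C(3)[OF g] by blast
    have cG: "c \<in> G" using ct(1) C(1) by blast
    have "restrict (\<lambda>h. u (emult g h)) R = restrict (\<lambda>h. u (emult c h)) R"
    proof (rule restrict_ext)
      fix h assume "h \<in> R"
      then have "h \<in> G" using R_sub by blast
      then show "u (emult g h) = u (emult c h)" using periodic_shift[OF N per cG ct(2)] ct(3) by simp
    qed
    then show ?thesis using C_iso[OF ct(1)] by simp
  qed
  with N per show ?thesis by (rule that)
qed

lemma offset_eq_snd_if_rot_one:
  assumes g: "g \<in> G" and r: "rot g = 1\<^sub>m d"
  shows "offset g = snd g"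
  using x0_carrier eucl_snd_carrier[OF G_eucl[OF g]] r by (intro eq_vecI) (auto simp: eact_def rot_def)

text \<open>A periodic u cannot grow along the lattice: a power p of a translation with rot p = 1 is a
  period, so the linear term S (p x0 - x0) = S (0, n b) of rot p u p - rot 1 u 1 vanishes.\<close>

lemma periodic_iso_kills_transl:
  assumes N: "N \<in> periods m0" and per: "periodic G (TNpow d T N) u"
    and uc: "\<And>g. g \<in> G \<Longrightarrow> u g \<in> carrier_vec d"
    and a: "a \<in> carrier_vec d" and Sm: "Sm \<in> carrier_mat d d"
    and iso: "\<And>g. g \<in> G \<Longrightarrow> rot g *\<^sub>v u g = a + Sm *\<^sub>v offset g"
    and t: "t \<in> T" and t_eq: "t = dsum d1 d2 A (1\<^sub>m d2, b)"
    and A: "A \<in> carrier_mat d1 d1" and b: "b \<in> carrier_vec d2"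
  shows "Sm *\<^sub>v (0\<^sub>v d1 @\<^sub>v b) = 0\<^sub>v d"
proof -
  have tG: "t \<in> G" using t T_sub by blast
  define n where "n = N * rot_exponent"
  define p where "p = epow d t n"
  have pG: "p \<in> G" using G_epow[OF tG] by (simp add: p_def)
  have rp: "rot p = 1\<^sub>m d" unfolding p_def n_def by (rule rot_epow_rot_exponent_dvd[OF tG]) simp
  have "p = epow d (epow d t N) rot_exponent"
    unfolding p_def n_def using epow_mult[OF G_subgroup tG] by simp
  moreover have "epow d t N \<in> TNpow d T N" unfolding TNpow_def using t by blast
  ultimately have "u p = u (eid d)"
    using periodic_epow[OF N per _ G_eid] G_eid_left[OF pG] by metis
  then have "a + Sm *\<^sub>v offset p = a + Sm *\<^sub>v offset (eid d)"
    using iso[OF pG] iso[OF G_eid] rp uc[OF G_eid] by (simp add: rot_eid)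
  then have "Sm *\<^sub>v offset p = 0\<^sub>v d"
    using add_left_cancel_vec[OF a mult_mat_vec_carrier[OF Sm offset_carrier[OF pG]] zero_carrier_vec]
      Sm a by (simp add: offset_eid)
  moreover have "offset p = real n \<cdot>\<^sub>v (0\<^sub>v d1 @\<^sub>v b)"
    using offset_eq_snd_if_rot_one[OF pG rp] snd_epow_dsum_transl[OF A b, of n] t_eq d_def b
    by (auto simp: p_def intro!: eq_vecI)
  moreover have "real n \<noteq> 0" using rot_exponent_pos N by (simp add: n_def periods_def)
  ultimately show ?thesis
    using smult_vec_eq_zero_cancel[of "real n" "Sm *\<^sub>v (0\<^sub>v d1 @\<^sub>v b)" d]
      mult_mat_vec[OF Sm, of "0\<^sub>v d1 @\<^sub>v b" "real n"] Sm b d_def by auto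
qed

lemma periodic_iso_kills_tail:
  assumes N: "N \<in> periods m0" and per: "periodic G (TNpow d T N) u"
    and uc: "\<And>g. g \<in> G \<Longrightarrow> u g \<in> carrier_vec d"
    and a: "a \<in> carrier_vec d" and Sm: "Sm \<in> carrier_mat d d"
    and iso: "\<And>g. g \<in> G \<Longrightarrow> rot g *\<^sub>v u g = a + Sm *\<^sub>v offset g"
    and y: "y \<in> carrier_vec d2"
  shows "Sm *\<^sub>v (0\<^sub>v d1 @\<^sub>v y) = 0\<^sub>v d"
proof -
  obtain t b where tT: "\<And>i. i < d2 \<Longrightarrow> t i \<in> T" and bc: "\<And>i. i < d2 \<Longrightarrow> b i \<in> carrier_vec d2"
    and tb: "\<And>i. i < d2 \<Longrightarrow> \<exists>A \<in> carrier_mat d1 d1. t i = dsum d1 d2 A (1\<^sub>m d2, b i)"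
    and indep: "lin_indep_vecs d2 (map b [0..<d2])"
    by (rule translation_basis) blast
  have kill: "Sm *\<^sub>v (0\<^sub>v d1 @\<^sub>v b i) = 0\<^sub>v d" if i: "i < d2" for i
    using tb[OF i] periodic_iso_kills_transl[OF N per uc a Sm iso tT[OF i]] bc[OF i] by blast
  obtain c where c: "\<forall>j. 0 \<le> j \<and> j < d2 \<longrightarrow> y $ j = (\<Sum>i<length (map b [0..<d2]). c i * map b [0..<d2] ! i $ j)"
    using lin_indep_vecs_span_tail[OF indep, of 0 y] by auto
  have comb: "(0\<^sub>v d1 @\<^sub>v y) $ l = (\<Sum>i\<in>{..<d2}. c i * (0\<^sub>v d1 @\<^sub>v b i) $ l)" if l: "l < d" for l
  proof (cases "l < d1")
    case True
    then show ?thesis using y bc by (auto intro!: sum.neutral)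
  next
    case False
    then have "l - d1 < d2" using l d_def by simp
    have "(0\<^sub>v d1 @\<^sub>v b i) $ l = b i $ (l - d1)" if "i < d2" for i
      using bc[OF that] False \<open>l - d1 < d2\<close> by simp
    moreover have "(0\<^sub>v d1 @\<^sub>v y) $ l = y $ (l - d1)" using y False \<open>l - d1 < d2\<close> by simp
    ultimately show ?thesis using c \<open>l - d1 < d2\<close> by simp
  qed
  have "(Sm *\<^sub>v (0\<^sub>v d1 @\<^sub>v y)) $ k = 0" if k: "k < d" for k
    using mult_mat_vec_lincomb[OF Sm finite_lessThan _ _ comb k] kill bc y d_def k by simp
  then show ?thesis using Sm by (intro eq_vecI) auto
qed

lemma kerR_subset_U_iso00:
  assumes u: "u \<in> kerR d G T m0 C x0 R"
  shows "u \<in> U_iso00 d1 d2 G x0"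
proof -
  obtain N where N: "N \<in> periods m0" and per: "periodic G (TNpow d T N) u"
    and loc: "\<And>g. g \<in> G \<Longrightarrow> restrict (\<lambda>h. u (emult g h)) R \<in> U_iso d x0 R"
    using kerR_locally_iso[OF u] by blast
  have uc: "\<And>g. g \<in> G \<Longrightarrow> u g \<in> carrier_vec d" and ue: "u \<in> extensional G"
    using u unfolding kerR_def U_per_def by auto
  obtain a Sm where a: "a \<in> carrier_vec d" and Sm: "Sm \<in> skew d"
    and iso: "\<And>g. g \<in> G \<Longrightarrow> rot g *\<^sub>v u g = a + Sm *\<^sub>v offset g"
    using locally_iso_imp_iso[OF uc loc] by blast
  obtain S1 where "S1 \<in> skew d1" "Sm = mdsum S1 (0\<^sub>m d2 d2)"
    using mdsum_eq_if_skew_kills_tail[of Sm d1 d2] Sm d_def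
      periodic_iso_kills_tail[OF N per uc a skew_carrier[OF Sm] iso] by auto
  then show ?thesis using ue uc a iso d_def unfolding U_iso00_def by auto
qed

lemma rot_mult_append_zero:
  assumes g: "g \<in> G" and v: "v \<in> carrier_vec d2"
  shows "\<exists>w\<in>carrier_vec d2. rot g *\<^sub>v (0\<^sub>v d1 @\<^sub>v v) = 0\<^sub>v d1 @\<^sub>v w"
proof -
  obtain A B b where "g = dsum d1 d2 A (B, b)" "A \<in> carrier_mat d1 d1" "B \<in> carrier_mat d2 d2"
    using G_dsum_form[OF g] by metis
  then show ?thesis using dsum_mult_append[of A d1 B d2 "0\<^sub>v d1" v b] v by (auto simp: rot_def)
qed

lemma U_iso00_periodic:
  assumes a: "a \<in> carrier_vec d" and S1: "S1 \<in> carrier_mat d1 d1"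
    and uc: "\<And>g. g \<in> G \<Longrightarrow> u g \<in> carrier_vec d"
    and iso: "\<And>g. g \<in> G \<Longrightarrow> rot g *\<^sub>v u g = a + mdsum S1 (0\<^sub>m d2 d2) *\<^sub>v offset g"
  shows "periodic G (TNpow d T (m0 * rot_exponent)) u"
  unfolding periodic_def
proof (intro ballI)
  let ?S = "mdsum S1 (0\<^sub>m d2 d2)"
  have Sc: "?S \<in> carrier_mat d d" using mdsum_carrier[OF S1 zero_carrier_mat] d_def by simp
  fix g t' assume g: "g \<in> G" and t': "t' \<in> TNpow d T (m0 * rot_exponent)"
  then obtain t where t: "t \<in> T" "t' = epow d t (m0 * rot_exponent)" unfolding TNpow_def by blast
  obtain A b where tf: "t = dsum d1 d2 A (1\<^sub>m d2, b)" "A \<in> carrier_mat d1 d1" "b \<in> carrier_vec d2"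
    using T_dsum_form[OF t(1)] by blast
  have tG: "t \<in> G" using t T_sub by blast
  have t'G: "t' \<in> G" using G_epow[OF tG] t by simp
  have rt: "rot t' = 1\<^sub>m d" unfolding t(2) by (rule rot_epow_rot_exponent_dvd[OF tG]) simp
  have "offset t' = 0\<^sub>v d1 @\<^sub>v (real (m0 * rot_exponent) \<cdot>\<^sub>v b)"
    using offset_eq_snd_if_rot_one[OF t'G rt] snd_epow_dsum_transl[OF tf(2,3)] tf(1) t(2) d_def by simp
  then obtain w where w: "w \<in> carrier_vec d2" "rot g *\<^sub>v offset t' = 0\<^sub>v d1 @\<^sub>v w"
    using rot_mult_append_zero[OF g, of "real (m0 * rot_exponent) \<cdot>\<^sub>v b"] tf(3) by auto
  have "?S *\<^sub>v offset (emult g t') = ?S *\<^sub>v offset g + ?S *\<^sub>v (0\<^sub>v d1 @\<^sub>v w)"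
    using offset_emult[OF g t'G] w Sc offset_carrier[OF g] d_def
    by (simp add: mult_add_distrib_mat_vec[of _ d d])
  also have "?S *\<^sub>v (0\<^sub>v d1 @\<^sub>v w) = 0\<^sub>v d" using mdsum_zero_mult_append[OF S1 w(1)] d_def by simp
  finally have "rot (emult g t') *\<^sub>v u (emult g t') = rot g *\<^sub>v u g"
    using iso[OF G_emult[OF g t'G]] iso[OF g] Sc offset_carrier[OF g] by simp
  moreover have "rot (emult g t') = rot g" using rt G_rot_carrier[OF g] by (simp add: rot_emult)
  ultimately have "rot g *\<^sub>v u (emult g t') = rot g *\<^sub>v u g" by simp
  then show "u (emult g t') = u g"
    using transpose_rot_mult_rot_vec[OF G_eucl[OF g] uc[OF g]]
      transpose_rot_mult_rot_vec[OF G_eucl[OF g] uc[OF G_emult[OF g t'G]]] by simp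
qed

text \<open>Seen from g, a globally isometric u is isometric with a_g = rot(g)^T (a + S (g x0 - x0)) and
  S_g = rot(g)^T S rot(g).\<close>

lemma iso_imp_shift_U_iso:
  assumes g: "g \<in> G" and uc: "\<And>x. x \<in> G \<Longrightarrow> u x \<in> carrier_vec d"
    and a: "a \<in> carrier_vec d" and Sm: "Sm \<in> skew d"
    and iso: "\<And>x. x \<in> G \<Longrightarrow> rot x *\<^sub>v u x = a + Sm *\<^sub>v offset x"
  shows "restrict (\<lambda>h. u (emult g h)) R \<in> U_iso d x0 R"
proof -
  have Sc: "Sm \<in> carrier_mat d d" using Sm by (rule skew_carrier)
  let ?Q = "rot g"
  have Qc: "?Q \<in> carrier_mat d d" using G_rot_carrier[OF g] .
  let ?ag = "?Q\<^sup>T *\<^sub>v (a + Sm *\<^sub>v offset g)"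
  let ?Sg = "?Q\<^sup>T * Sm * ?Q"
  have "rot h *\<^sub>v u (emult g h) = ?ag + ?Sg *\<^sub>v offset h" if h: "h \<in> R" for h
  proof -
    have hG: "h \<in> G" using h R_sub by blast
    have "rot h *\<^sub>v u (emult g h) = ?Q\<^sup>T *\<^sub>v (rot (emult g h) *\<^sub>v u (emult g h))"
      using transpose_rot_mult_rot_vec[OF G_eucl[OF g], of "rot h *\<^sub>v u (emult g h)"]
        G_rot_carrier[OF hG] Qc uc[OF G_emult[OF g hG]] by (simp add: rot_emult)
    also have "\<dots> = ?Q\<^sup>T *\<^sub>v ((a + Sm *\<^sub>v offset g) + Sm *\<^sub>v (?Q *\<^sub>v offset h))"
      using iso[OF G_emult[OF g hG]] offset_emult[OF g hG] Sc Qc a offset_carrier[OF g] offset_carrier[OF hG]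
      by (simp add: mult_add_distrib_mat_vec[of _ d d] assoc_add_vec[of _ d])
    also have "\<dots> = ?ag + ?Sg *\<^sub>v offset h"
      using Sc Qc a offset_carrier[OF g] offset_carrier[OF hG]
      by (simp add: mult_add_distrib_mat_vec[of _ d d] assoc_mult_mat[of _ d d _ d _ d] assoc_add_vec[of _ d]
          assoc_mult_mat_vec[of "?Q\<^sup>T" d d _ d] assoc_mult_mat_vec[of Sm d d _ d])
    finally show ?thesis .
  qed
  moreover have "?ag \<in> carrier_vec d" using Qc a Sc offset_carrier[OF g] by simp
  moreover have "?Sg \<in> skew d" using transpose_mult_skew_mult[OF Sm Qc] .
  moreover have "restrict (\<lambda>h. u (emult g h)) R h \<in> carrier_vec d" if h: "h \<in> R" for h
  proof -
    have "h \<in> G" using h R_sub by blast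
    then show ?thesis using uc[OF G_emult[OF g]] h by simp
  qed
  ultimately show ?thesis unfolding U_iso_def by auto
qed

lemma U_iso00_subset_kerR:
  assumes u: "u \<in> U_iso00 d1 d2 G x0"
  shows "u \<in> kerR d G T m0 C x0 R"
proof -
  obtain a S1 where a: "a \<in> carrier_vec d" and S1: "S1 \<in> skew d1"
    and iso: "\<And>g. g \<in> G \<Longrightarrow> rot g *\<^sub>v u g = a + mdsum S1 (0\<^sub>m d2 d2) *\<^sub>v offset g"
    and ue: "u \<in> extensional G" and uc: "\<And>g. g \<in> G \<Longrightarrow> u g \<in> carrier_vec d"
    using u d_def unfolding U_iso00_def by auto
  define N where "N = m0 * rot_exponent"
  have N: "N \<in> periods m0" using m0_pos rot_exponent_pos by (simp add: N_def periods_def)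
  have per: "periodic G (TNpow d T N) u"
    unfolding N_def using U_iso00_periodic[OF a skew_carrier[OF S1] uc iso] .
  have Sm: "mdsum S1 (0\<^sub>m d2 d2) \<in> skew d" using mdsum_zero_skew[OF S1] d_def by simp
  have "setdist R (restrict (\<lambda>h. u (emult c h)) R) (U_iso d x0 R) = 0" if c: "c \<in> C N" for c
  proof -
    have cG: "c \<in> G" using c C_reps N by blast
    have "restrict (\<lambda>h. u (emult c h)) R h \<in> carrier_vec d" if h: "h \<in> R" for h
    proof -
      have "h \<in> G" using h R_sub by blast
      then show ?thesis using uc[OF G_emult[OF cG]] h by simp
    qed
    with iso_imp_shift_U_iso[OF cG uc a Sm iso] show ?thesis by (rule setdist_eq_0_if_mem)
  qed
  then have "seminormR d x0 R (C N) u = 0" unfolding seminormR_def by simp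
  then show ?thesis using ue uc N per unfolding kerR_def U_per_def by blast
qed

lemma kerR_eq_U_iso00: "kerR d G T m0 C x0 R = U_iso00 d1 d2 G x0"
  using kerR_subset_U_iso00 U_iso00_subset_kerR by blast

section \<open>Parametrization of the kernel\<close>

abbreviation Phi :: "real vec \<times> real mat \<times> real mat \<Rightarrow> euc \<Rightarrow> real vec" where
  "Phi \<equiv> PhiMap d2 d3 d4 G x0"

abbreviation param_mat :: "real mat \<Rightarrow> real mat \<Rightarrow> real mat" where
  "param_mat A1 A2 \<equiv> mdsum (block_skew d3 A1 A2) (0\<^sub>m d2 d2)"

lemma PhiMap_apply:
  "g \<in> G \<Longrightarrow> Phi (a, A1, A2) g = (rot g)\<^sup>T *\<^sub>v (a + param_mat A1 A2 *\<^sub>v offset g)"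
  by (simp add: PhiMap_def block_skew_def)

lemma PhiMap_extensional: "Phi p \<in> extensional G"
  by (cases p) (simp add: PhiMap_def)

lemma param_mat_carrier:
  assumes "A1 \<in> carrier_mat d3 d4" "A2 \<in> carrier_mat d4 d4"
  shows "param_mat A1 A2 \<in> carrier_mat d d"
proof -
  have "block_skew d3 A1 A2 \<in> carrier_mat d1 d1"
    using block_skew_carrier[OF assms] by (simp only: d3_add_d4)
  from mdsum_carrier[OF this zero_carrier_mat] show ?thesis by (simp add: d_def)
qed

lemma param_mat_index:
  assumes "A1 \<in> carrier_mat d3 d4" "A2 \<in> carrier_mat d4 d4" "i < d" "j < d"
  shows "param_mat A1 A2 $$ (i, j) = (if i < d1 \<and> j < d1 then block_skew d3 A1 A2 $$ (i, j) else 0)"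
  using mdsum_zero_index[OF block_skew_carrier[OF assms(1,2)], of i d2 j] assms d3_add_d4 d_def by simp

lemma PhiMap_in_U_iso00:
  assumes p: "(a, A1, A2) \<in> param_dom d d3 d4"
  shows "Phi (a, A1, A2) \<in> U_iso00 d1 d2 G x0"
proof -
  have a: "a \<in> carrier_vec d" and A1: "A1 \<in> carrier_mat d3 d4" and A2: "A2 \<in> skew d4"
    using p by (auto simp: param_dom_def)
  have M: "param_mat A1 A2 \<in> carrier_mat d d" using param_mat_carrier[OF A1 skew_carrier[OF A2]] .
  have w: "a + param_mat A1 A2 *\<^sub>v offset g \<in> carrier_vec d" if "g \<in> G" for g
    using a M offset_carrier[OF that] by simp
  have "rot g *\<^sub>v Phi (a, A1, A2) g = a + param_mat A1 A2 *\<^sub>v offset g" if g: "g \<in> G" for g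
    using PhiMap_apply[OF g] rot_mult_transpose_rot_vec[OF G_eucl[OF g] w[OF g]] by simp
  moreover have "Phi (a, A1, A2) g \<in> carrier_vec d" if g: "g \<in> G" for g
    using PhiMap_apply[OF g] w[OF g] G_rot_carrier[OF g] by simp
  moreover have "block_skew d3 A1 A2 \<in> skew d1" using block_skew_skew[OF A1 A2] d3_add_d4 by simp
  ultimately show ?thesis
    using PhiMap_extensional a d_def unfolding U_iso00_def by auto
qed

lemma mult_offset_eq_iff_last_cols:
  assumes M: "M \<in> carrier_mat d d" and M': "M' \<in> carrier_mat d d"
  shows "(\<forall>g\<in>G. M *\<^sub>v offset g = M' *\<^sub>v offset g) \<longleftrightarrow>
    (\<forall>k<d. \<forall>j. d3 \<le> j \<longrightarrow> j < d \<longrightarrow> M $$ (k, j) = M' $$ (k, j))"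
proof
  assume eq: "\<forall>g\<in>G. M *\<^sub>v offset g = M' *\<^sub>v offset g"
  have off: "\<And>h. h \<in> R \<Longrightarrow> offset h \<in> carrier_vec d" using R_sub offset_carrier by blast
  show "\<forall>k<d. \<forall>j. d3 \<le> j \<longrightarrow> j < d \<longrightarrow> M $$ (k, j) = M' $$ (k, j)"
  proof (intro allI impI)
    fix k j assume k: "k < d" and j: "d3 \<le> j" "j < d"
    have "M $$ (k, j) = (\<Sum>h\<in>R. unit_coeff j h * (M *\<^sub>v offset h) $ k)"
      using mult_mat_vec_lincomb[OF M R_finite off _ unit_coeff[OF j] k] mult_mat_vec_unit_vec_index[OF M k j(2)]
      by simp
    also have "\<dots> = (\<Sum>h\<in>R. unit_coeff j h * (M' *\<^sub>v offset h) $ k)"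
      using eq R_sub by (intro sum.cong) auto
    also have "\<dots> = M' $$ (k, j)"
      using mult_mat_vec_lincomb[OF M' R_finite off _ unit_coeff[OF j] k] mult_mat_vec_unit_vec_index[OF M' k j(2)]
      by simp
    finally show "M $$ (k, j) = M' $$ (k, j)" .
  qed
next
  assume cols: "\<forall>k<d. \<forall>j. d3 \<le> j \<longrightarrow> j < d \<longrightarrow> M $$ (k, j) = M' $$ (k, j)"
  show "\<forall>g\<in>G. M *\<^sub>v offset g = M' *\<^sub>v offset g"
  proof (intro ballI eq_vecI)
    fix g i assume g: "g \<in> G" and "i < dim_vec (M' *\<^sub>v offset g)"
    then have i: "i < d" using M' by simp
    have "(\<Sum>l\<in>{d3..<d}. M $$ (i, l) * offset g $ l) = (\<Sum>l\<in>{d3..<d}. M' $$ (i, l) * offset g $ l)"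
      using cols i by (intro sum.cong) auto
    then show "(M *\<^sub>v offset g) $ i = (M' *\<^sub>v offset g) $ i"
      using mult_offset_eq_tail[OF M g i] mult_offset_eq_tail[OF M' g i] by simp
  qed (use M M' in simp)
qed

lemma PhiMap_inj: "inj_on Phi (param_dom d d3 d4)"
proof (rule inj_onI)
  fix p q assume p: "p \<in> param_dom d d3 d4" and q: "q \<in> param_dom d d3 d4" and eq: "Phi p = Phi q"
  obtain a A1 A2 b B1 B2 where pq: "p = (a, A1, A2)" "q = (b, B1, B2)" by (cases p, cases q) auto
  have a: "a \<in> carrier_vec d" and A: "A1 \<in> carrier_mat d3 d4" "A2 \<in> carrier_mat d4 d4"
    and b: "b \<in> carrier_vec d" and B: "B1 \<in> carrier_mat d3 d4" "B2 \<in> carrier_mat d4 d4"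
    using p q pq by (auto simp: param_dom_def skew_def)
  have MA: "param_mat A1 A2 \<in> carrier_mat d d" and MB: "param_mat B1 B2 \<in> carrier_mat d d"
    using param_mat_carrier A B by auto
  have vals: "a + param_mat A1 A2 *\<^sub>v offset g = b + param_mat B1 B2 *\<^sub>v offset g" if g: "g \<in> G" for g
    using arg_cong[OF eq, of "\<lambda>f. rot g *\<^sub>v f g"] PhiMap_apply[OF g] pq
      rot_mult_transpose_rot_vec[OF G_eucl[OF g]] a b MA MB offset_carrier[OF g] by simp
  have ab: "a = b" using vals[OF G_eid] a b MA MB by (simp add: offset_eid)
  have "\<forall>g\<in>G. param_mat A1 A2 *\<^sub>v offset g = param_mat B1 B2 *\<^sub>v offset g"
  proof
    fix g assume g: "g \<in> G"
    have "b + param_mat A1 A2 *\<^sub>v offset g = b + param_mat B1 B2 *\<^sub>v offset g" using vals[OF g] ab by simp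
    then show "param_mat A1 A2 *\<^sub>v offset g = param_mat B1 B2 *\<^sub>v offset g"
      by (rule add_left_cancel_vec[OF b mult_mat_vec_carrier[OF MA offset_carrier[OF g]]
            mult_mat_vec_carrier[OF MB offset_carrier[OF g]]])
  qed
  then have cols: "\<forall>k<d. \<forall>j. d3 \<le> j \<longrightarrow> j < d \<longrightarrow> param_mat A1 A2 $$ (k, j) = param_mat B1 B2 $$ (k, j)"
    by (rule mult_offset_eq_iff_last_cols[OF MA MB, THEN iffD1])
  have "block_skew d3 A1 A2 $$ (i, j) = block_skew d3 B1 B2 $$ (i, j)"
    if "i < d3 + d4" "d3 \<le> j" "j < d3 + d4" for i j
  proof -
    have ij: "i < d1" "j < d1" "i < d" "j < d" using that d3_add_d4 d_def by auto
    have "param_mat A1 A2 $$ (i, j) = param_mat B1 B2 $$ (i, j)"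
      using cols[rule_format, of i j] ij that by simp
    then show ?thesis using param_mat_index[OF A ij(3,4)] param_mat_index[OF B ij(3,4)] ij by simp
  qed
  then have "A1 = B1 \<and> A2 = B2" by (rule block_skew_eq_iff_last_cols[OF A B])
  then show "p = q" using pq ab by simp
qed

lemma U_iso00_subset_PhiMap_image:
  assumes u: "u \<in> U_iso00 d1 d2 G x0"
  shows "u \<in> Phi ` param_dom d d3 d4"
proof -
  obtain a S1 where a: "a \<in> carrier_vec d" and S1: "S1 \<in> skew d1"
    and iso: "\<And>g. g \<in> G \<Longrightarrow> rot g *\<^sub>v u g = a + mdsum S1 (0\<^sub>m d2 d2) *\<^sub>v offset g"
    and ue: "u \<in> extensional G" and uc: "\<And>g. g \<in> G \<Longrightarrow> u g \<in> carrier_vec d"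
    using u d_def unfolding U_iso00_def by auto
  obtain A1 A2 where A1: "A1 \<in> carrier_mat d3 d4" and A2: "A2 \<in> skew d4"
    and cols: "\<And>i j. i < d3 + d4 \<Longrightarrow> d3 \<le> j \<Longrightarrow> j < d3 + d4 \<Longrightarrow> block_skew d3 A1 A2 $$ (i, j) = S1 $$ (i, j)"
    using skew_last_cols_eq_block_skew[of S1 d3 d4] S1 d3_add_d4 by auto
  have S1c: "S1 \<in> carrier_mat d1 d1" using S1 by (rule skew_carrier)
  have Mc: "mdsum S1 (0\<^sub>m d2 d2) \<in> carrier_mat d d" using mdsum_carrier[OF S1c zero_carrier_mat] d_def by simp
  have MA: "param_mat A1 A2 \<in> carrier_mat d d" using param_mat_carrier[OF A1 skew_carrier[OF A2]] .
  have "mdsum S1 (0\<^sub>m d2 d2) $$ (k, j) = param_mat A1 A2 $$ (k, j)" if "k < d" "d3 \<le> j" "j < d" for k j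
    using that cols[of k j] mdsum_zero_index[OF S1c, of k d2 j] param_mat_index[OF A1 skew_carrier[OF A2]]
      d3_add_d4 d_def by auto
  then have offs: "mdsum S1 (0\<^sub>m d2 d2) *\<^sub>v offset g = param_mat A1 A2 *\<^sub>v offset g" if "g \<in> G" for g
    using mult_offset_eq_iff_last_cols[OF Mc MA] that by blast
  have "Phi (a, A1, A2) = u"
  proof (rule extensionalityI[OF PhiMap_extensional ue])
    fix g assume g: "g \<in> G"
    show "Phi (a, A1, A2) g = u g"
      using PhiMap_apply[OF g] offs[OF g] iso[OF g] transpose_rot_mult_rot_vec[OF G_eucl[OF g] uc[OF g]] by simp
  qed
  moreover have "(a, A1, A2) \<in> param_dom d d3 d4" using a A1 A2 by (simp add: param_dom_def)
  ultimately show ?thesis by force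
qed

lemma PhiMap_bij: "bij_betw Phi (param_dom d d3 d4) (kerR d G T m0 C x0 R)"
  unfolding bij_betw_def kerR_eq_U_iso00
  using PhiMap_inj PhiMap_in_U_iso00 U_iso00_subset_PhiMap_image by fast

lemma PhiMap_add:
  assumes p: "(a, A1, A2) \<in> param_dom d d3 d4" and q: "(b, B1, B2) \<in> param_dom d d3 d4"
  shows "Phi (a + b, A1 + B1, A2 + B2) = restrict (\<lambda>g. Phi (a, A1, A2) g + Phi (b, B1, B2) g) G"
proof (rule extensionalityI[OF PhiMap_extensional])
  have a: "a \<in> carrier_vec d" and A: "A1 \<in> carrier_mat d3 d4" "A2 \<in> carrier_mat d4 d4"
    and b: "b \<in> carrier_vec d" and B: "B1 \<in> carrier_mat d3 d4" "B2 \<in> carrier_mat d4 d4"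
    using p q by (auto simp: param_dom_def skew_def)
  have MA: "param_mat A1 A2 \<in> carrier_mat d d" and MB: "param_mat B1 B2 \<in> carrier_mat d d"
    using param_mat_carrier A B by auto
  have sum: "param_mat (A1 + B1) (A2 + B2) = param_mat A1 A2 + param_mat B1 B2"
    unfolding block_skew_add[OF A B]
    using mdsum_zero_add[OF block_skew_carrier[OF A] block_skew_carrier[OF B]] .
  fix g assume g: "g \<in> G"
  have off: "offset g \<in> carrier_vec d" using offset_carrier[OF g] .
  have va: "a + param_mat A1 A2 *\<^sub>v offset g \<in> carrier_vec d"
    and vb: "b + param_mat B1 B2 *\<^sub>v offset g \<in> carrier_vec d" using a b MA MB off by auto
  have "a + b + param_mat (A1 + B1) (A2 + B2) *\<^sub>v offset g
      = (a + param_mat A1 A2 *\<^sub>v offset g) + (b + param_mat B1 B2 *\<^sub>v offset g)"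
    unfolding sum add_mult_distrib_mat_vec[OF MA MB off] using a b MA MB off by (intro eq_vecI) auto
  then have "Phi (a + b, A1 + B1, A2 + B2) g
      = (rot g)\<^sup>T *\<^sub>v (a + param_mat A1 A2 *\<^sub>v offset g) + (rot g)\<^sup>T *\<^sub>v (b + param_mat B1 B2 *\<^sub>v offset g)"
    using PhiMap_apply[OF g] mult_add_distrib_mat_vec[OF _ va vb, of "(rot g)\<^sup>T" d] G_rot_carrier[OF g] by simp
  then show "Phi (a + b, A1 + B1, A2 + B2) g = restrict (\<lambda>g. Phi (a, A1, A2) g + Phi (b, B1, B2) g) G g"
    using g PhiMap_apply[OF g] by simp
qed simp

lemma PhiMap_smult:
  assumes p: "(a, A1, A2) \<in> param_dom d d3 d4"
  shows "Phi (c \<cdot>\<^sub>v a, c \<cdot>\<^sub>m A1, c \<cdot>\<^sub>m A2) = restrict (\<lambda>g. c \<cdot>\<^sub>v Phi (a, A1, A2) g) G"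
proof (rule extensionalityI[OF PhiMap_extensional])
  have a: "a \<in> carrier_vec d" and A: "A1 \<in> carrier_mat d3 d4" "A2 \<in> carrier_mat d4 d4"
    using p by (auto simp: param_dom_def skew_def)
  have MA: "param_mat A1 A2 \<in> carrier_mat d d" using param_mat_carrier A by auto
  have scale: "param_mat (c \<cdot>\<^sub>m A1) (c \<cdot>\<^sub>m A2) = c \<cdot>\<^sub>m param_mat A1 A2"
    unfolding block_skew_smult[OF A] using mdsum_zero_smult[OF block_skew_carrier[OF A]] .
  fix g assume g: "g \<in> G"
  have "c \<cdot>\<^sub>v a + (c \<cdot>\<^sub>m param_mat A1 A2) *\<^sub>v offset g = c \<cdot>\<^sub>v (a + param_mat A1 A2 *\<^sub>v offset g)"
    unfolding smult_mat_mult_mat_vec[OF MA offset_carrier[OF g]]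
    using a MA offset_carrier[OF g] by (intro eq_vecI) (auto simp: distrib_left)
  then show "Phi (c \<cdot>\<^sub>v a, c \<cdot>\<^sub>m A1, c \<cdot>\<^sub>m A2) g = restrict (\<lambda>g. c \<cdot>\<^sub>v Phi (a, A1, A2) g) G g"
    using g PhiMap_apply[OF g] scale a MA offset_carrier[OF g] G_rot_carrier[OF g]
    by (simp add: mult_mat_vec[of _ d d])
qed simp

end

theorem corollary3p28:
  fixes d1 d2 d daff m0 :: nat
    and S G T R :: "euc set"
    and C :: "nat \<Rightarrow> euc set"
    and x0 :: "real vec"
  assumes d_def: "d = d1 + d2"
    and S_space: "space_group d2 S"
    and G_discrete: "discrete_esubgroup d G"
    and G_sub: "G \<subseteq> {dsum d1 d2 A s | A s. A \<in> orth_group d1 \<and> s \<in> S}"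
    and G_onto: "\<forall>s\<in>S. \<exists>g\<in>G. eproj d1 d2 g = s"
    and T_sub: "T \<subseteq> G"
    and T_bij: "bij_betw (eproj d1 d2) T (transl_sub d2 S)"
    and m0_pos: "m0 \<ge> 1"
    and TN_normal: "\<forall>N\<ge>1. enormal d (TNpow d T N) G \<longleftrightarrow> m0 dvd N"
    and C_reps: "\<forall>N\<in>periods m0. C N \<subseteq> G \<and> finite (C N) \<and>
                   (\<forall>g\<in>G. \<exists>!c. c \<in> C N \<and> (\<exists>t\<in>TNpow d T N. g = emult c t))"
    and x0_carrier: "x0 \<in> carrier_vec d"
    and x0_inj: "inj_on (\<lambda>g. eact g x0) G"
    and daff_def: "daff = affdim d ((\<lambda>g. eact g x0) ` G)"
    and orbit_zero: "\<forall>g\<in>G. \<forall>i<d - daff. eact g x0 $ i = 0"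
    and G_trivial: "\<forall>g\<in>G. \<forall>y\<in>carrier_vec d. (\<forall>i. d - daff \<le> i \<and> i < d \<longrightarrow> y $ i = 0)
                        \<longrightarrow> rot g *\<^sub>v y = y"
    and rot_finite: "finite (rot ` G)"
    and R_prop2: "property2 d x0 G R"
  shows "kerR d G T m0 C x0 R = U_iso00 d1 d2 G x0
    \<and> bij_betw (PhiMap d2 (d - daff) (daff - d2) G x0)
               (param_dom d (d - daff) (daff - d2)) (kerR d G T m0 C x0 R)
    \<and> (\<forall>a A1 A2 b B1 B2 c.
          (a, A1, A2) \<in> param_dom d (d - daff) (daff - d2) \<longrightarrow>
          (b, B1, B2) \<in> param_dom d (d - daff) (daff - d2) \<longrightarrow>
          PhiMap d2 (d - daff) (daff - d2) G x0 (a + b, A1 + B1, A2 + B2)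
            = restrict (\<lambda>g. PhiMap d2 (d - daff) (daff - d2) G x0 (a, A1, A2) g
                          + PhiMap d2 (d - daff) (daff - d2) G x0 (b, B1, B2) g) G
          \<and> PhiMap d2 (d - daff) (daff - d2) G x0 (c \<cdot>\<^sub>v a, c \<cdot>\<^sub>m A1, c \<cdot>\<^sub>m A2)
            = restrict (\<lambda>g. c \<cdot>\<^sub>v PhiMap d2 (d - daff) (daff - d2) G x0 (a, A1, A2) g) G)
    \<and> d + (d - daff) * (daff - d2) + (daff - d2) * (daff - d2 - 1) div 2
        = d + (daff - d2) * ((d - daff) + d1 - 1) div 2"
proof -
  obtain Rgen Raff where Rgen: "Rgen \<subseteq> G" "eid d \<in> Rgen" "egen d Rgen = G"
    and Raff: "property1 d x0 G Raff" and RR: "{emult g h | g h. g \<in> Rgen \<and> h \<in> Raff} \<subseteq> R"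
    using R_prop2 by (auto simp: property2_def)
  interpret seminorm_setting d1 d2 d daff m0 S G T C x0 R Rgen Raff
  proof
    show "esubgroup d2 S" "\<exists>ts. set ts \<subseteq> transl_sub d2 S \<and> length ts = d2 \<and> lin_indep_vecs d2 (map snd ts)"
      using S_space by (auto simp: space_group_def discrete_esubgroup_def)
    show "esubgroup d G" using G_discrete by (simp add: discrete_esubgroup_def)
    show "\<And>N. N \<in> periods m0 \<Longrightarrow> enormal d (TNpow d T N) G" using TN_normal by (auto simp: periods_def)
    show "R \<subseteq> G" "finite R" using R_prop2 by (auto simp: property2_def)
    show "\<And>g h. g \<in> Rgen \<Longrightarrow> h \<in> Raff \<Longrightarrow> emult g h \<in> R" using RR by blast
  qed (use assms Rgen Raff in auto)
  show ?thesis
    using kerR_eq_U_iso00 PhiMap_bij PhiMap_add PhiMap_smult dim_count_identity[OF d3_add_d4] by blast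
qed

end
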